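(* Let $(W,S)$ be a Coxeter system with $S$ finite and take $t=0$ in the construction below. Then for every $x\in C_W$, the linear map $\rho(x)$ sends each basis vector $\varepsilon_J$ ($J\in\mathcal F(S)$) to $\pm\varepsilon_{K}$ for some $K\in\mathcal F(S)$. Consequently, the image $\rho(C_W)$ is finite; in particular, if $C_W$ is infinite then $\rho$ is not faithful, and the restriction of $\rho$ to any infinite subgroup of $C_W$ is not faithful.
   Context: For $I\subset S$, $W_I$ is the subgroup generated by $I$; when finite, $w_I$ is its longest element. A nonempty $I\subset S$ is connected if $W_I$ is finite and there is no decomposition $I=J\cup K$ with $J,K$ disjoint nonempty and $W_I=W_J\times W_K$ (every element of $J$ commutes with every element of $K$). $\mathcal F(S)$ is the set of connected subsets. For $J\subset I$ with $W_I$ finite, $w_I(J):=\{w_Isw_I:s\in J\}\subset S$. The generalized cactus group $C_W$ is generated by $\{\gamma_I:I\in\mathcal F(S)\}$ with relations $\gamma_I^2=1$ and $\gamma_I\gamma_J=\gamma_J\gamma_{w_J(I)}$ whenever $I\subset J$ or $W_{I\cup J}=W_I\times W_J$. $E$ is the real vector space with basis $\{\varepsilon_I\}_{I\in\mathcal F(S)}$, equipped with the standard inner product $B_0$ for which this basis is orthonormal. $\mathcal C(I):=\{J\in\mathcal F(S):J\subsetneq I\}$, $E_I$ is the span of $\{\varepsilon_J-\varepsilon_{w_I(J)}:J\in\mathcal C(I)\}$, $F_I$ is the orthogonal complement of $\mathbb R\varepsilon_I\oplus E_I$, $\rho_I$ is $-\mathrm{id}$ on $\mathbb R\varepsilon_I\oplus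 E_I$ and $\mathrm{id}$ on $F_I$, and $\rho:C_W\to GL(E)$ is the homomorphism with $\rho(\gamma_I)=\rho_I$. *)

theory Defs
  imports "HOL-Algebra.Multiplicative_Group" "HOL-Algebra.Generated_Groups" "HOL-Library.Function_Algebras"
begin

text \<open>The presentation is expressed by its universal property; since the presented group
is countable, it suffices to test against groups whose carrier is a set of naturals.\<close>

definition coxeter_system :: "'w monoid \<Rightarrow> 'w set \<Rightarrow> bool" where
  "coxeter_system W S \<longleftrightarrow>
     group W \<and> finite S \<and> S \<subseteq> carrier W \<and> generate W S = carrier W \<and>
     (\<forall>s\<in>S. s \<noteq> \<one>\<^bsub>W\<^esub> \<and> s \<otimes>\<^bsub>W\<^esub> s = \<one>\<^bsub>W\<^esub>) \<and>
     (\<forall>(G :: nat monoid) (f :: 'w \<Rightarrow> nat).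
        group G \<longrightarrow> f ` S \<subseteq> carrier G \<longrightarrow>
        (\<forall>s\<in>S. \<forall>t\<in>S. group.ord W (s \<otimes>\<^bsub>W\<^esub> t) \<noteq> 0 \<longrightarrow>
            (f s \<otimes>\<^bsub>G\<^esub> f t) [^]\<^bsub>G\<^esub> group.ord W (s \<otimes>\<^bsub>W\<^esub> t) = \<one>\<^bsub>G\<^esub>) \<longrightarrow>
        (\<exists>h \<in> hom W G. \<forall>s\<in>S. h s = f s))"

definition cox_length :: "'w monoid \<Rightarrow> 'w set \<Rightarrow> 'w \<Rightarrow> nat" where
  "cox_length W S w = (LEAST n. \<exists>ws. length ws = n \<and> set ws \<subseteq> S \<and>
                         foldr (\<otimes>\<^bsub>W\<^esub>) ws \<one>\<^bsub>W\<^esub> = w)"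

definition longest :: "'w monoid \<Rightarrow> 'w set \<Rightarrow> 'w set \<Rightarrow> 'w" where
  "longest W S I = (THE w. w \<in> generate W I \<and>
       (\<forall>v \<in> generate W I. cox_length W S v \<le> cox_length W S w))"

definition conj_set :: "'w monoid \<Rightarrow> 'w set \<Rightarrow> 'w set \<Rightarrow> 'w set \<Rightarrow> 'w set" where
  "conj_set W S I J = (\<lambda>s. longest W S I \<otimes>\<^bsub>W\<^esub> s \<otimes>\<^bsub>W\<^esub> longest W S I) ` J"

text \<open>W_{I \<union> J} = W_I \<times> W_J, in the sense used in the paper: I, J disjoint and
every element of I commutes with every element of J.\<close>
definition commuting_split :: "'w monoid \<Rightarrow> 'w set \<Rightarrow> 'w set \<Rightarrow> bool" where
  "commuting_split W J K \<longleftrightarrow> J \<inter> K = {} \<and>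
     (\<forall>s\<in>J. \<forall>t\<in>K. s \<otimes>\<^bsub>W\<^esub> t = t \<otimes>\<^bsub>W\<^esub> s)"

definition connected_subset :: "'w monoid \<Rightarrow> 'w set \<Rightarrow> 'w set \<Rightarrow> bool" where
  "connected_subset W S I \<longleftrightarrow> I \<noteq> {} \<and> I \<subseteq> S \<and> finite (generate W I) \<and>
     \<not> (\<exists>J K. J \<noteq> {} \<and> K \<noteq> {} \<and> I = J \<union> K \<and> commuting_split W J K)"

definition conn :: "'w monoid \<Rightarrow> 'w set \<Rightarrow> 'w set set" where
  "conn W S = {I. connected_subset W S I}"

text \<open>C (with generators gamma) is the generalized cactus group C_W: it is generated by
gamma ` F(S), the defining relations hold, and it has the universal property of the
presentation (tested against groups on nat, which suffices since C_W is countable).\<close>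

definition cactus_rels :: "'w monoid \<Rightarrow> 'w set \<Rightarrow> ('c, 'b) monoid_scheme \<Rightarrow> ('w set \<Rightarrow> 'c) \<Rightarrow> bool" where
  "cactus_rels W S G g \<longleftrightarrow>
     g ` conn W S \<subseteq> carrier G \<and>
     (\<forall>I\<in>conn W S. g I \<otimes>\<^bsub>G\<^esub> g I = \<one>\<^bsub>G\<^esub>) \<and>
     (\<forall>I\<in>conn W S. \<forall>J\<in>conn W S. (I \<subseteq> J \<or> commuting_split W I J) \<longrightarrow>
        g I \<otimes>\<^bsub>G\<^esub> g J = g J \<otimes>\<^bsub>G\<^esub> g (conj_set W S J I))"

definition cactus_group :: "'w monoid \<Rightarrow> 'w set \<Rightarrow> 'c monoid \<Rightarrow> ('w set \<Rightarrow> 'c) \<Rightarrow> bool" where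
  "cactus_group W S C \<gamma> \<longleftrightarrow>
     group C \<and> cactus_rels W S C \<gamma> \<and> generate C (\<gamma> ` conn W S) = carrier C \<and>
     (\<forall>(G :: nat monoid) (f :: 'w set \<Rightarrow> nat). group G \<longrightarrow> cactus_rels W S G f \<longrightarrow>
        (\<exists>h \<in> hom C G. \<forall>I\<in>conn W S. h (\<gamma> I) = f I))"

text \<open>E = real vector space with basis eps_I, I in F(S): modelled as real-valued
functions on sets vanishing outside F(S).\<close>

type_synonym 'w vec = "'w set \<Rightarrow> real"

definition Espace :: "'w monoid \<Rightarrow> 'w set \<Rightarrow> 'w vec set" where
  "Espace W S = {v. \<forall>J. J \<notin> conn W S \<longrightarrow> v J = 0}"

definition eps :: "'w set \<Rightarrow> 'w vec" where
  "eps I = (\<lambda>J. if J = I then 1 else 0)"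

definition vspan :: "'w vec set \<Rightarrow> 'w vec set" where
  "vspan X = module.span (\<lambda>(c::real) (v::'w vec) J. c * v J) X"

definition B0 :: "'w monoid \<Rightarrow> 'w set \<Rightarrow> 'w vec \<Rightarrow> 'w vec \<Rightarrow> real" where
  "B0 W S u v = (\<Sum>J\<in>conn W S. u J * v J)"

definition Csub :: "'w monoid \<Rightarrow> 'w set \<Rightarrow> 'w set \<Rightarrow> 'w set set" where
  "Csub W S I = {J \<in> conn W S. J \<subset> I}"

definition E_I :: "'w monoid \<Rightarrow> 'w set \<Rightarrow> 'w set \<Rightarrow> 'w vec set" where
  "E_I W S I = vspan ((\<lambda>J. eps J - eps (conj_set W S I J)) ` Csub W S I)"

definition U_I :: "'w monoid \<Rightarrow> 'w set \<Rightarrow> 'w set \<Rightarrow> 'w vec set" where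
  "U_I W S I = {(\<lambda>J. c * eps I J) + e | c e. e \<in> E_I W S I}"

definition F_I :: "'w monoid \<Rightarrow> 'w set \<Rightarrow> 'w set \<Rightarrow> 'w vec set" where
  "F_I W S I = {f \<in> Espace W S. \<forall>u \<in> U_I W S I. B0 W S f u = 0}"

definition rho_I :: "'w monoid \<Rightarrow> 'w set \<Rightarrow> 'w set \<Rightarrow> 'w vec \<Rightarrow> 'w vec" where
  "rho_I W S I v = (THE w. \<exists>u \<in> U_I W S I. \<exists>f \<in> F_I W S I. v = u + f \<and> w = f - u)"

end

theory Submission
  imports Defs "HOL-Library.Countable_Set"
begin

text \<open>The map \<open>\<rho>\<^sub>I\<close> fixes \<open>F\<^sub>I\<close> and negates \<open>\<real>\<epsilon>\<^sub>I + E\<^sub>I\<close>. Since conjugation by \<open>w\<^sub>I\<close> permutes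
the proper connected subsets of \<open>I\<close> involutively, a basis vector \<open>\<epsilon>\<^sub>J\<close> with \<open>J \<subset> I\<close> splits as
\<open>(\<epsilon>\<^sub>J - \<epsilon>\<^sub>J\<^sub>') / 2 + (\<epsilon>\<^sub>J + \<epsilon>\<^sub>J\<^sub>') / 2\<close> with \<open>J' = w\<^sub>I(J)\<close>, the first summand in \<open>E\<^sub>I\<close> and the second in
\<open>F\<^sub>I\<close>. Hence \<open>\<rho>\<^sub>I\<close> sends \<open>\<epsilon>\<^sub>I\<close> to \<open>-\<epsilon>\<^sub>I\<close>, \<open>\<epsilon>\<^sub>J\<close> to \<open>\<epsilon>\<^sub>J\<^sub>'\<close>, and fixes all other basis vectors: it is a
signed permutation of the finite basis. Signed permutations are closed under composition and
there are only finitely many of them, and the \<open>\<gamma>\<^sub>I\<close> generate \<open>C\<^sub>W\<close>.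

The Coxeter-theoretic input is that \<open>w\<^sub>I\<close> is well defined, an involution, and normalises \<open>I\<close>.
It comes from Tits' sign cocycle: letting \<open>s\<close> act on pairs (reflection, sign) by conjugation,
flipping the sign at \<open>s\<close> itself, respects the Coxeter relations, so every \<open>w\<close> gets an inversion
set \<open>N(w)\<close>. One has \<open>|N(w)| = \<ell>(w)\<close>, \<open>N\<close> is injective, and the elements of maximal length in a
finite \<open>W\<^sub>I\<close> are exactly those with \<open>N(w)\<close> the set of all reflections of \<open>W\<^sub>I\<close>.\<close>

definition wprod :: "('a, 'b) monoid_scheme \<Rightarrow> 'a list \<Rightarrow> 'a" where
  "wprod G as = foldr (\<otimes>\<^bsub>G\<^esub>) as \<one>\<^bsub>G\<^esub>"

lemma wprod_Nil [simp]: "wprod G [] = \<one>\<^bsub>G\<^esub>"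
  and wprod_Cons [simp]: "wprod G (a # as) = a \<otimes>\<^bsub>G\<^esub> wprod G as"
  by (simp_all add: wprod_def)

context group
begin

lemma wprod_closed [simp, intro]: "set as \<subseteq> carrier G \<Longrightarrow> wprod G as \<in> carrier G"
  by (induct as) auto

lemma wprod_append:
  "set as \<subseteq> carrier G \<Longrightarrow> set bs \<subseteq> carrier G \<Longrightarrow> wprod G (as @ bs) = wprod G as \<otimes> wprod G bs"
  by (induct as) (auto simp: m_assoc)

lemma inv_involution: "a \<in> carrier G \<Longrightarrow> a \<otimes> a = \<one> \<Longrightarrow> inv a = a"
  by (rule inv_equality) auto

lemma involution_cancel: "a \<in> carrier G \<Longrightarrow> a \<otimes> a = \<one> \<Longrightarrow> x \<in> carrier G \<Longrightarrow> a \<otimes> (a \<otimes> x) = x"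
  by (simp add: m_assoc[symmetric])

lemma inv_mult_cancel_left [simp]: "u \<in> carrier G \<Longrightarrow> x \<in> carrier G \<Longrightarrow> inv u \<otimes> (u \<otimes> x) = x"
  and mult_inv_cancel_left [simp]: "u \<in> carrier G \<Longrightarrow> x \<in> carrier G \<Longrightarrow> u \<otimes> (inv u \<otimes> x) = x"
  by (simp_all add: m_assoc[symmetric])

lemma inv_wprod_involutions:
  "\<forall>a\<in>set as. a \<in> carrier G \<and> a \<otimes> a = \<one> \<Longrightarrow> inv (wprod G as) = wprod G (rev as)"
  by (induct as) (simp_all add: inv_mult_group wprod_append inv_involution subset_iff)

lemma generate_involutions_eq_wprod:
  assumes A: "A \<subseteq> carrier G" "\<forall>a\<in>A. a \<otimes> a = \<one>"
  shows "generate G A = {wprod G as | as. set as \<subseteq> A}"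
proof
  show "generate G A \<subseteq> {wprod G as | as. set as \<subseteq> A}"
  proof
    fix x assume "x \<in> generate G A"
    then show "x \<in> {wprod G as | as. set as \<subseteq> A}"
    proof induct
      case one then show ?case by (auto intro!: exI[of _ "[]"])
    next
      case (incl h) then show ?case using A by (auto intro!: exI[of _ "[h]"])
    next
      case (inv h) then show ?case using A by (auto intro!: exI[of _ "[h]"] simp: inv_involution subset_iff)
    next
      case (eng h1 h2)
      then obtain as bs where "set as \<subseteq> A" "h1 = wprod G as" "set bs \<subseteq> A" "h2 = wprod G bs" by auto
      then show ?case using A by (auto intro!: exI[of _ "as @ bs"] simp: wprod_append)
    qed
  qed
next
  show "{wprod G as | as. set as \<subseteq> A} \<subseteq> generate G A"
  proof safe
    fix as assume "set as \<subseteq> A"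
    then show "wprod G as \<in> generate G A"
      by (induct as) (auto intro: generate.intros)
  qed
qed

lemma conj_eq_iff:
  assumes "a \<in> carrier G" "b \<in> carrier G" "a \<otimes> b = \<one>" "x \<in> carrier G" "y \<in> carrier G"
  shows "a \<otimes> x \<otimes> b = y \<longleftrightarrow> x = b \<otimes> y \<otimes> a"
proof
  have ba: "b \<otimes> a = \<one>" using assms inv_comm by blast
  assume "a \<otimes> x \<otimes> b = y"
  moreover have "b \<otimes> (a \<otimes> x \<otimes> b) \<otimes> a = (b \<otimes> a) \<otimes> x \<otimes> (b \<otimes> a)" using assms by (simp add: m_assoc)
  ultimately show "x = b \<otimes> y \<otimes> a" using ba assms by simp
next
  assume "x = b \<otimes> y \<otimes> a"
  moreover have "a \<otimes> (b \<otimes> y \<otimes> a) \<otimes> b = (a \<otimes> b) \<otimes> y \<otimes> (a \<otimes> b)"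
    using assms(1,2,5) by (simp add: m_assoc)
  ultimately show "a \<otimes> x \<otimes> b = y" using assms by simp
qed

end

section \<open>Tits' sign cocycle\<close>

locale coxeter =
  fixes W :: "'w monoid" (structure) and S :: "'w set"
  assumes coxeter_system: "coxeter_system W S"
begin

sublocale group W
  using coxeter_system by (simp add: coxeter_system_def)

lemma finite_S: "finite S" and S_carrier: "S \<subseteq> carrier W" and generate_S: "generate W S = carrier W"
  using coxeter_system by (simp_all add: coxeter_system_def)

lemma S_involution: "s \<in> S \<Longrightarrow> s \<otimes> s = \<one>"
  using coxeter_system by (auto simp: coxeter_system_def)

lemma S_in_carrier: "s \<in> S \<Longrightarrow> s \<in> carrier W"
  using S_carrier by auto

lemma carrier_eq_wprod: "carrier W = {wprod W as | as. set as \<subseteq> S}"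
  using generate_involutions_eq_wprod[OF S_carrier] S_involution generate_S by auto

text \<open>Pairs outside \<open>carrier W \<times> UNIV\<close> are fixed only to make \<open>sign_act s\<close> a total involution.\<close>

definition sign_act :: "'w \<Rightarrow> 'w \<times> bool \<Rightarrow> 'w \<times> bool" where
  "sign_act s = (\<lambda>(r, e). if r \<in> carrier W then (s \<otimes> r \<otimes> s, e \<noteq> (r = s)) else (r, e))"

lemma sign_act_involution:
  assumes "s \<in> S" shows "sign_act s \<circ> sign_act s = id"
proof
  fix x :: "'w \<times> bool"
  obtain r e where x: "x = (r, e)" by force
  have s: "s \<in> carrier W" "s \<otimes> s = \<one>" using assms S_involution S_in_carrier by auto
  show "(sign_act s \<circ> sign_act s) x = id x"
  proof (cases "r \<in> carrier W")
    case True
    have "s \<otimes> (s \<otimes> r \<otimes> s) \<otimes> s = r" using True s by (simp add: m_assoc involution_cancel)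
    moreover have "s \<otimes> r \<otimes> s = s \<longleftrightarrow> r = s"
      using conj_eq_iff[OF s(1) s(1) s(2) True s(1)] s by (simp add: m_assoc)
    ultimately show ?thesis using True s by (auto simp: x sign_act_def)
  qed (simp add: x sign_act_def)
qed

lemma alternating_word_shift:
  assumes s: "s \<in> carrier W" "s \<otimes> s = \<one>" and t: "t \<in> carrier W" "t \<otimes> t = \<one>"
    and r: "r \<in> carrier W"
  shows "(t \<otimes> s) [^] Suc (Suc j) \<otimes> t = r \<longleftrightarrow> (t \<otimes> s) [^] j \<otimes> t = s \<otimes> (t \<otimes> r \<otimes> t) \<otimes> s"
proof -
  define v where "v = t \<otimes> s"
  have vc: "v \<in> carrier W" and vj: "v [^] j \<in> carrier W" using s t by (simp_all add: v_def)
  have "v [^] Suc (Suc j) \<otimes> t = v \<otimes> v [^] j \<otimes> (v \<otimes> t)"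
    using vc t by (simp add: nat_pow_Suc2[OF vc, symmetric] m_assoc)
  also have "v \<otimes> t = t \<otimes> (s \<otimes> t)" using s t by (simp add: v_def m_assoc)
  finally have "v [^] Suc (Suc j) \<otimes> t = v \<otimes> (v [^] j \<otimes> t) \<otimes> (s \<otimes> t)"
    using vc vj s t by (simp add: m_assoc)
  moreover have "v \<otimes> (s \<otimes> t) = \<one>"
    using s t by (simp add: v_def m_assoc[symmetric]) (simp add: m_assoc)
  ultimately have "v [^] Suc (Suc j) \<otimes> t = r \<longleftrightarrow> v [^] j \<otimes> t = (s \<otimes> t) \<otimes> r \<otimes> v"
    using conj_eq_iff[of v "s \<otimes> t" "v [^] j \<otimes> t" r] vc vj s t r by simp
  also have "(s \<otimes> t) \<otimes> r \<otimes> v = s \<otimes> (t \<otimes> r \<otimes> t) \<otimes> s" using s t r by (simp add: v_def m_assoc)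
  finally show ?thesis unfolding v_def .
qed

text \<open>The sign flips once for each \<open>j < 2n\<close> with \<open>(ts)\<^sup>j t = r\<close>, the reflections met along the
alternating word \<open>stst\<dots>\<close> of length \<open>2n\<close>.\<close>

lemma sign_act_alternating_power:
  assumes s: "s \<in> carrier W" "s \<otimes> s = \<one>" and t: "t \<in> carrier W" "t \<otimes> t = \<one>"
  shows "r \<in> carrier W \<Longrightarrow> ((sign_act s \<circ> sign_act t) ^^ n) (r, e) =
     ((s \<otimes> t) [^] n \<otimes> r \<otimes> (t \<otimes> s) [^] n,
      e \<noteq> odd (\<Sum>j<2 * n. if (t \<otimes> s) [^] j \<otimes> t = r then 1 else (0::nat)))"
proof (induct n arbitrary: r e)
  case 0 then show ?case by simp
next
  case (Suc n)
  define u where "u = s \<otimes> t"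
  define v where "v = t \<otimes> s"
  have uc: "u \<in> carrier W" and vc: "v \<in> carrier W" using s t by (auto simp: u_def v_def)
  define r' where "r' = s \<otimes> (t \<otimes> r \<otimes> t) \<otimes> s"
  have rc: "r \<in> carrier W" by fact
  have r'c: "r' \<in> carrier W" using s t rc by (simp add: r'_def)
  have step: "(sign_act s \<circ> sign_act t) (r, e) = (r', (e \<noteq> (r = t)) \<noteq> (t \<otimes> r \<otimes> t = s))"
    using rc s t by (simp add: sign_act_def r'_def)
  have IH: "((sign_act s \<circ> sign_act t) ^^ n) (r', e') = (u [^] n \<otimes> r' \<otimes> v [^] n,
      e' \<noteq> odd (\<Sum>j<2 * n. if v [^] j \<otimes> t = r' then 1 else (0::nat)))" for e'
    unfolding u_def v_def by (rule Suc(1)[OF r'c])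
  have conj: "u [^] n \<otimes> r' \<otimes> v [^] n = u [^] Suc n \<otimes> r \<otimes> v [^] Suc n"
  proof -
    have "u [^] Suc n = u [^] n \<otimes> u" "v [^] Suc n = v \<otimes> v [^] n"
      using nat_pow_Suc2[OF vc] by simp_all
    then show ?thesis using uc vc s t rc by (simp add: r'_def u_def v_def m_assoc)
  qed
  have flip_s: "t \<otimes> r \<otimes> t = s \<longleftrightarrow> v \<otimes> t = r"
    using conj_eq_iff[OF t(1) t(1) t(2) rc s(1)] s t rc by (auto simp: v_def m_assoc)
  have shift: "v [^] Suc (Suc j) \<otimes> t = r \<longleftrightarrow> v [^] j \<otimes> t = r'" for j
    unfolding v_def r'_def by (rule alternating_word_shift[OF s t rc])
  have count: "(\<Sum>j<2 * Suc n. if v [^] j \<otimes> t = r then 1 else (0::nat)) =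
      (if t = r then 1 else 0) + ((if v \<otimes> t = r then 1 else 0) +
      (\<Sum>j<2 * n. if v [^] j \<otimes> t = r' then 1 else (0::nat)))"
  proof -
    have "2 * Suc n = Suc (Suc (2 * n))" "v [^] Suc 0 = v" using vc by simp_all
    then show ?thesis by (simp only: sum.lessThan_Suc_shift shift nat_pow_0) (simp add: t(1))
  qed
  have unfold: "((sign_act s \<circ> sign_act t) ^^ Suc n) (r, e) =
      ((sign_act s \<circ> sign_act t) ^^ n) ((sign_act s \<circ> sign_act t) (r, e))"
    unfolding funpow_Suc_right by (rule comp_apply)
  show ?case unfolding unfold u_def[symmetric] v_def[symmetric] step IH conj count flip_s by auto
qed

lemma sum_lessThan_add: "(\<Sum>j<a + b. f j) = (\<Sum>j<a. f j) + (\<Sum>j<b. f (a + j :: nat))"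
  by (induct b) (simp_all add: add.assoc)

text \<open>Each reflection \<open>(ts)\<^sup>j t\<close> occurs with period \<open>m = ord (st)\<close> in \<open>j\<close>, hence an even number of
times among \<open>j < 2m\<close>.\<close>

lemma sign_act_coxeter_relation:
  assumes s: "s \<in> carrier W" "s \<otimes> s = \<one>" and t: "t \<in> carrier W" "t \<otimes> t = \<one>"
  shows "(sign_act s \<circ> sign_act t) ^^ ord (s \<otimes> t) = id"
proof
  fix x :: "'w \<times> bool"
  obtain r e where x: "x = (r, e)" by force
  define m where "m = ord (s \<otimes> t)"
  have um: "(s \<otimes> t) [^] m = \<one>" using s t by (simp add: m_def)
  have "t \<otimes> s = inv (s \<otimes> t)" using s t by (simp add: inv_mult_group inv_involution)
  then have vm: "(t \<otimes> s) [^] m = \<one>" using s t um by (simp add: nat_pow_inv)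
  show "((sign_act s \<circ> sign_act t) ^^ ord (s \<otimes> t)) x = id x"
  proof (cases "r \<in> carrier W")
    case False
    have "((sign_act s \<circ> sign_act t) ^^ k) (r, e) = (r, e)" for k
      using False by (induct k) (simp_all add: sign_act_def)
    then show ?thesis by (simp add: x)
  next
    case True
    define f :: "nat \<Rightarrow> nat" where "f j = (if (t \<otimes> s) [^] j \<otimes> t = r then 1 else 0)" for j
    have "f (m + j) = f j" for j
      using s t by (simp add: f_def nat_pow_mult[symmetric] vm)
    then have "(\<Sum>j<2 * m. f j) = 2 * (\<Sum>j<m. f j)"
      using sum_lessThan_add[where a=m and b=m and f=f] by (simp add: mult_2)
    then have "even (\<Sum>j<2 * m. f j)" by simp
    then show ?thesis using sign_act_alternating_power[OF s t True, of m e] um vm True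
      by (simp add: x m_def[symmetric] f_def)
  qed
qed

definition sign_act_word :: "'w list \<Rightarrow> 'w \<times> bool \<Rightarrow> 'w \<times> bool" where
  "sign_act_word as = foldr (\<lambda>a f. sign_act a \<circ> f) as id"

lemma sign_act_word_Nil [simp]: "sign_act_word [] = id"
  and sign_act_word_Cons [simp]: "sign_act_word (a # as) = sign_act a \<circ> sign_act_word as"
  by (simp_all add: sign_act_word_def)

lemma sign_act_word_append: "sign_act_word (as @ bs) = sign_act_word as \<circ> sign_act_word bs"
  by (induct as) (simp_all add: comp_assoc)

lemma sign_act_word_rev: "set as \<subseteq> S \<Longrightarrow> sign_act_word (rev as) \<circ> sign_act_word as = id"
proof (induct as)
  case (Cons a as)
  have "sign_act_word (rev (a # as)) \<circ> sign_act_word (a # as) =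
      sign_act_word (rev as) \<circ> (sign_act a \<circ> sign_act a) \<circ> sign_act_word as"
    by (simp add: sign_act_word_append comp_assoc)
  also have "\<dots> = sign_act_word (rev as) \<circ> sign_act_word as"
    using Cons.prems sign_act_involution by simp
  also have "\<dots> = id" by (rule Cons.hyps) (use Cons.prems in simp)
  finally show ?case .
qed simp

definition sign_perms :: "('w \<times> bool \<Rightarrow> 'w \<times> bool) set" where
  "sign_perms = sign_act_word ` lists S"

lemma countable_sign_perms: "countable sign_perms"
  unfolding sign_perms_def using finite_S by (simp add: countable_finite)

lemma id_sign_perms: "id \<in> sign_perms"
  unfolding sign_perms_def by (auto intro!: image_eqI[of _ _ "[]"])

lemma comp_sign_perms: "f \<in> sign_perms \<Longrightarrow> g \<in> sign_perms \<Longrightarrow> f \<circ> g \<in> sign_perms"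
  unfolding sign_perms_def by (auto simp: sign_act_word_append[symmetric] intro!: imageI)

lemma inverse_sign_perms: "f \<in> sign_perms \<Longrightarrow> \<exists>g\<in>sign_perms. g \<circ> f = id"
  unfolding sign_perms_def using sign_act_word_rev by (fastforce intro!: imageI)

lemma sign_act_sign_perms: "s \<in> S \<Longrightarrow> sign_act s \<in> sign_perms"
  unfolding sign_perms_def by (auto intro!: image_eqI[of _ _ "[s]"])

lemma funpow_sign_perms: "f \<in> sign_perms \<Longrightarrow> f ^^ n \<in> sign_perms"
  by (induct n) (simp_all add: id_sign_perms comp_sign_perms)

text \<open>The universal property in \<open>coxeter_system\<close> only speaks about groups carried by
\<open>nat\<close>, so the countable group \<open>sign_perms\<close> is transported along an enumeration.\<close>

definition sign_code :: "('w \<times> bool \<Rightarrow> 'w \<times> bool) \<Rightarrow> nat" where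
  "sign_code = to_nat_on sign_perms"

definition sign_decode :: "nat \<Rightarrow> 'w \<times> bool \<Rightarrow> 'w \<times> bool" where
  "sign_decode = from_nat_into sign_perms"

lemma sign_decode_code [simp]: "f \<in> sign_perms \<Longrightarrow> sign_decode (sign_code f) = f"
  using countable_sign_perms by (simp add: sign_code_def sign_decode_def)

definition sign_code_group :: "nat monoid" where
  "sign_code_group = \<lparr>carrier = sign_code ` sign_perms,
     mult = (\<lambda>a b. sign_code (sign_decode a \<circ> sign_decode b)), one = sign_code id\<rparr>"

lemma sign_code_group_simps:
  "carrier sign_code_group = sign_code ` sign_perms"
  "a \<otimes>\<^bsub>sign_code_group\<^esub> b = sign_code (sign_decode a \<circ> sign_decode b)"
  "\<one>\<^bsub>sign_code_group\<^esub> = sign_code id"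
  by (simp_all add: sign_code_group_def)

lemma group_sign_code_group: "group sign_code_group"
proof (rule groupI)
  show "\<exists>y\<in>carrier sign_code_group. y \<otimes>\<^bsub>sign_code_group\<^esub> x = \<one>\<^bsub>sign_code_group\<^esub>"
    if x: "x \<in> carrier sign_code_group" for x
  proof -
    obtain f where f: "f \<in> sign_perms" "x = sign_code f"
      using x unfolding sign_code_group_simps by blast
    obtain g where "g \<in> sign_perms" "g \<circ> f = id" using inverse_sign_perms[OF f(1)] by auto
    then show ?thesis using f by (intro bexI[of _ "sign_code g"]) (auto simp: sign_code_group_simps)
  qed
qed (auto simp: sign_code_group_simps comp_sign_perms id_sign_perms comp_assoc)

lemma sign_code_pow:
  "f \<in> sign_perms \<Longrightarrow> sign_code f [^]\<^bsub>sign_code_group\<^esub> n = sign_code (f ^^ n)"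
proof (induct n)
  case (Suc n)
  then show ?case
    by (simp add: sign_code_group_simps funpow_sign_perms funpow_Suc_right comp_def del: funpow.simps)
qed (simp add: sign_code_group_simps)

lemma sign_hom_exists: "\<exists>h\<in>hom W sign_code_group. \<forall>s\<in>S. h s = sign_code (sign_act s)"
proof -
  have rel: "(sign_code (sign_act s) \<otimes>\<^bsub>sign_code_group\<^esub> sign_code (sign_act t))
      [^]\<^bsub>sign_code_group\<^esub> ord (s \<otimes> t) = \<one>\<^bsub>sign_code_group\<^esub>" if "s \<in> S" "t \<in> S" for s t
  proof -
    have "(sign_code (sign_act s) \<otimes>\<^bsub>sign_code_group\<^esub> sign_code (sign_act t))
        [^]\<^bsub>sign_code_group\<^esub> ord (s \<otimes> t) = sign_code ((sign_act s \<circ> sign_act t) ^^ ord (s \<otimes> t))"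
      using that by (simp add: sign_code_group_simps sign_act_sign_perms comp_sign_perms sign_code_pow)
    also have "\<dots> = sign_code id"
      using sign_act_coxeter_relation[of s t] that S_in_carrier S_involution by simp
    finally show ?thesis by (simp add: sign_code_group_simps)
  qed
  have "(\<lambda>s. sign_code (sign_act s)) ` S \<subseteq> carrier sign_code_group"
    using sign_act_sign_perms by (auto simp: sign_code_group_simps)
  moreover have "\<forall>(G :: nat monoid) (f :: 'w \<Rightarrow> nat). group G \<longrightarrow> f ` S \<subseteq> carrier G \<longrightarrow>
      (\<forall>s\<in>S. \<forall>t\<in>S. ord (s \<otimes> t) \<noteq> 0 \<longrightarrow> (f s \<otimes>\<^bsub>G\<^esub> f t) [^]\<^bsub>G\<^esub> ord (s \<otimes> t) = \<one>\<^bsub>G\<^esub>) \<longrightarrow>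
      (\<exists>h \<in> hom W G. \<forall>s\<in>S. h s = f s)"
    using coxeter_system by (simp add: coxeter_system_def)
  ultimately show ?thesis using group_sign_code_group rel by blast
qed

definition sign_hom :: "'w \<Rightarrow> nat" where
  "sign_hom = (SOME h. h \<in> hom W sign_code_group \<and> (\<forall>s\<in>S. h s = sign_code (sign_act s)))"

lemma sign_hom: "sign_hom \<in> hom W sign_code_group" "s \<in> S \<Longrightarrow> sign_hom s = sign_code (sign_act s)"
  using someI_ex[OF sign_hom_exists[unfolded Bex_def]] by (auto simp: sign_hom_def)

definition act :: "'w \<Rightarrow> 'w \<times> bool \<Rightarrow> 'w \<times> bool" where
  "act w = sign_decode (sign_hom w)"

lemma act_sign_perms: "w \<in> carrier W \<Longrightarrow> act w \<in> sign_perms"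
  using hom_carrier[OF sign_hom(1)] by (auto simp: act_def sign_code_group_simps)

lemma act_mult:
  assumes "x \<in> carrier W" "y \<in> carrier W"
  shows "act (x \<otimes> y) = act x \<circ> act y"
proof -
  have "sign_hom (x \<otimes> y) = sign_code (act x \<circ> act y)"
    using hom_mult[OF sign_hom(1) assms] by (simp add: act_def sign_code_group_simps)
  then show ?thesis
    using comp_sign_perms[OF act_sign_perms act_sign_perms] assms by (simp add: act_def)
qed

lemma act_gen: "s \<in> S \<Longrightarrow> act s = sign_act s"
  by (simp add: act_def sign_hom sign_act_sign_perms)

lemma act_one: "act \<one> = id"
proof -
  have "act \<one> = act \<one> \<circ> act \<one>" using act_mult[of \<one> \<one>] by simp
  moreover obtain g where "g \<circ> act \<one> = id" using inverse_sign_perms[OF act_sign_perms[of \<one>]] by auto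
  ultimately show ?thesis by (metis comp_assoc id_comp)
qed

section \<open>Inversion sets and length\<close>

definition inversions :: "'w \<Rightarrow> 'w set" where
  "inversions w = {r \<in> carrier W. snd (act w (r, False))}"

lemma inversions_subset_carrier: "inversions w \<subseteq> carrier W"
  by (auto simp: inversions_def)

lemma inversions_one: "inversions \<one> = {}"
  by (simp add: inversions_def act_one)

lemma inversions_gen: "s \<in> S \<Longrightarrow> inversions s = {s}"
  using S_carrier by (auto simp: inversions_def act_gen sign_act_def)

lemma act_wprod:
  "set as \<subseteq> S \<Longrightarrow> r \<in> carrier W \<Longrightarrow> act (wprod W as) (r, e) =
     (wprod W as \<otimes> r \<otimes> inv (wprod W as), e \<noteq> (r \<in> inversions (wprod W as)))"
proof (induct as arbitrary: r e)
  case Nil then show ?case by (simp add: act_one inversions_def)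
next
  case (Cons a as)
  define y where "y = wprod W as"
  have a: "a \<in> carrier W" "a \<otimes> a = \<one>" using Cons S_carrier S_involution by auto
  have y: "y \<in> carrier W" using Cons S_carrier by (auto simp: y_def)
  have r: "r \<in> carrier W" by fact
  have act_ay: "act (a \<otimes> y) (r, e) =
      (a \<otimes> (y \<otimes> r \<otimes> inv y) \<otimes> a, (e \<noteq> (r \<in> inversions y)) \<noteq> (y \<otimes> r \<otimes> inv y = a))" for e
    using Cons act_mult[OF a(1) y] act_gen[of a] y r a by (simp add: sign_act_def y_def)
  have inv_ay: "r \<in> inversions (a \<otimes> y) \<longleftrightarrow> (r \<in> inversions y) \<noteq> (y \<otimes> r \<otimes> inv y = a)"
    using act_ay[of False] r by (simp add: inversions_def)
  have conj_ay: "(a \<otimes> y) \<otimes> r \<otimes> inv (a \<otimes> y) = a \<otimes> (y \<otimes> r \<otimes> inv y) \<otimes> a"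
    using a y r by (simp add: inv_mult_group inv_involution m_assoc)
  show ?case unfolding wprod_Cons y_def[symmetric] act_ay inv_ay conj_ay by auto
qed

lemma act_eq:
  "w \<in> carrier W \<Longrightarrow> r \<in> carrier W \<Longrightarrow> act w (r, e) = (w \<otimes> r \<otimes> inv w, e \<noteq> (r \<in> inversions w))"
proof -
  assume w: "w \<in> carrier W" and r: "r \<in> carrier W"
  obtain as where "set as \<subseteq> S" "w = wprod W as" using w carrier_eq_wprod by auto
  then show ?thesis using act_wprod r by simp
qed

lemma inversions_mult:
  assumes "x \<in> carrier W" "y \<in> carrier W" "r \<in> carrier W"
  shows "r \<in> inversions (x \<otimes> y) \<longleftrightarrow> (r \<in> inversions y) \<noteq> (y \<otimes> r \<otimes> inv y \<in> inversions x)"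
proof -
  have "act (x \<otimes> y) (r, False) = act x (y \<otimes> r \<otimes> inv y, r \<in> inversions y)"
    using assms by (simp add: act_mult act_eq)
  also have "\<dots> = (x \<otimes> (y \<otimes> r \<otimes> inv y) \<otimes> inv x, (r \<in> inversions y) \<noteq> (y \<otimes> r \<otimes> inv y \<in> inversions x))"
    using assms by (simp add: act_eq)
  finally show ?thesis using assms(3) unfolding inversions_def by simp
qed

lemma inversions_inv:
  "x \<in> carrier W \<Longrightarrow> r \<in> carrier W \<Longrightarrow> r \<in> inversions (inv x) \<longleftrightarrow> inv x \<otimes> r \<otimes> x \<in> inversions x"
  using inversions_mult[of x "inv x" r] by (simp add: inversions_one)

lemma inversions_gen_mult:
  assumes s: "s \<in> S" and w: "w \<in> carrier W" and r: "r \<in> carrier W"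
  shows "r \<in> inversions (s \<otimes> w) \<longleftrightarrow> (r \<in> inversions w) \<noteq> (r = inv w \<otimes> s \<otimes> w)"
proof -
  have sc: "s \<in> carrier W" using s S_carrier by auto
  have "r \<in> inversions (s \<otimes> w) \<longleftrightarrow> (r \<in> inversions w) \<noteq> (w \<otimes> r \<otimes> inv w \<in> inversions s)"
    by (rule inversions_mult[OF sc w r])
  also have "w \<otimes> r \<otimes> inv w \<in> inversions s \<longleftrightarrow> r = inv w \<otimes> s \<otimes> w"
    using conj_eq_iff[of w "inv w" r s] w r sc by (simp add: inversions_gen[OF s])
  finally show ?thesis .
qed

abbreviation len :: "'w \<Rightarrow> nat" where
  "len \<equiv> cox_length W S"

lemma len_eq_Least: "len w = (LEAST n. \<exists>ws. length ws = n \<and> set ws \<subseteq> S \<and> wprod W ws = w)"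
  by (simp add: cox_length_def wprod_def)

lemma reduced_word_exists: "w \<in> carrier W \<Longrightarrow> \<exists>ws. length ws = len w \<and> set ws \<subseteq> S \<and> wprod W ws = w"
proof -
  assume "w \<in> carrier W"
  then obtain as where "set as \<subseteq> S" "wprod W as = w" using carrier_eq_wprod by auto
  then have "\<exists>n ws. length ws = n \<and> set ws \<subseteq> S \<and> wprod W ws = w" by blast
  then show ?thesis unfolding len_eq_Least by (rule LeastI_ex)
qed

lemma len_le_length: "set ws \<subseteq> S \<Longrightarrow> len (wprod W ws) \<le> length ws"
  unfolding len_eq_Least by (rule Least_le) blast

lemma len_one: "len \<one> = 0"
  using len_le_length[of "[]"] by simp

lemma len_eq_0_iff:
  assumes "w \<in> carrier W" shows "len w = 0 \<longleftrightarrow> w = \<one>"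
proof
  assume "len w = 0"
  then have "\<exists>ws. ws = [] \<and> wprod W ws = w" using reduced_word_exists[OF assms] by auto
  then show "w = \<one>" by force
qed (simp add: len_one)

lemma len_gen_mult_le: "s \<in> S \<Longrightarrow> w \<in> carrier W \<Longrightarrow> len (s \<otimes> w) \<le> len w + 1"
proof -
  assume s: "s \<in> S" and w: "w \<in> carrier W"
  obtain ws where "length ws = len w" "set ws \<subseteq> S" "wprod W ws = w"
    using reduced_word_exists[OF w] by blast
  then show ?thesis using len_le_length[of "s # ws"] s by simp
qed

lemma len_gen_mult_ge: "s \<in> S \<Longrightarrow> w \<in> carrier W \<Longrightarrow> len w \<le> len (s \<otimes> w) + 1"
proof -
  assume s: "s \<in> S" and w: "w \<in> carrier W"
  have "s \<otimes> (s \<otimes> w) = w" using involution_cancel[OF S_in_carrier[OF s] S_involution[OF s] w] .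
  then show ?thesis using len_gen_mult_le[OF s, of "s \<otimes> w"] s w S_in_carrier by simp
qed

lemma len_decompose:
  assumes w: "w \<in> carrier W" "w \<noteq> \<one>"
  shows "\<exists>s\<in>S. \<exists>w'\<in>carrier W. w = s \<otimes> w' \<and> len w = len w' + 1"
proof -
  obtain ws where ws: "length ws = len w" "set ws \<subseteq> S" "wprod W ws = w"
    using reduced_word_exists[OF w(1)] by blast
  then obtain s ws' where sw: "ws = s # ws'" using w(2) by (cases ws) auto
  define w' where "w' = wprod W ws'"
  have s: "s \<in> S" and ws': "set ws' \<subseteq> S" using ws sw by auto
  have w': "w' \<in> carrier W" using ws' S_carrier by (auto simp: w'_def)
  have w_eq: "w = s \<otimes> w'" using ws sw by (simp add: w'_def)
  have "len w' \<le> length ws'" using len_le_length[OF ws'] by (simp add: w'_def)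
  moreover have "len w \<le> len w' + 1" unfolding w_eq by (rule len_gen_mult_le[OF s w'])
  moreover have "len w = length ws' + 1" using ws(1) sw by simp
  ultimately have "len w = len w' + 1" by linarith
  with s w' w_eq show ?thesis by blast
qed

lemma len_inv: "w \<in> carrier W \<Longrightarrow> len (inv w) = len w"
proof -
  have le: "len (inv w) \<le> len w" if w: "w \<in> carrier W" for w
  proof -
    obtain ws where ws: "length ws = len w" "set ws \<subseteq> S" "wprod W ws = w"
      using reduced_word_exists[OF w] by blast
    have "inv w = wprod W (rev ws)" using inv_wprod_involutions[of ws] ws S_carrier S_involution by auto
    then show ?thesis using len_le_length[of "rev ws"] ws by simp
  qed
  show "w \<in> carrier W \<Longrightarrow> ?thesis" using le[of w] le[of "inv w"] by simp
qed

lemma inversions_card_len: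
  "w \<in> carrier W \<Longrightarrow> finite (inversions w) \<and> card (inversions w) = len w \<and>
     (\<forall>t\<in>inversions w. len (w \<otimes> t) < len w)"
proof (induct "len w" arbitrary: w rule: less_induct)
  case less
  show ?case
  proof (cases "w = \<one>")
    case True then show ?thesis by (simp add: inversions_one len_one)
  next
    case False
    obtain s w' where s: "s \<in> S" and w': "w' \<in> carrier W" and w_eq: "w = s \<otimes> w'"
      and len_w: "len w = len w' + 1"
      using len_decompose[OF less(2) False] by blast
    have sc: "s \<in> carrier W" using s S_carrier by auto
    have IH: "finite (inversions w') \<and> card (inversions w') = len w' \<and>
        (\<forall>t\<in>inversions w'. len (w' \<otimes> t) < len w')"
      using less(1)[of w'] len_w w' by simp
    define c where "c = inv w' \<otimes> s \<otimes> w'"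
    have cc: "c \<in> carrier W" using sc w' by (simp add: c_def)
    have "w' \<otimes> c = w" using sc w' by (simp add: c_def w_eq m_assoc[symmetric])
    then have wc: "w \<otimes> c = w'"
      using sc w' cc involution_cancel[OF sc S_involution[OF s]] by (simp add: w_eq m_assoc)
    have "r \<in> inversions w \<longleftrightarrow> (r \<in> inversions w') \<noteq> (r = c)" if "r \<in> carrier W" for r
      unfolding w_eq c_def using inversions_gen_mult[OF s w' that] .
    moreover have c_new: "c \<notin> inversions w'"
    proof
      assume "c \<in> inversions w'"
      then have "len (w' \<otimes> c) < len w'" using IH by blast
      then show False using \<open>w' \<otimes> c = w\<close> len_w by simp
    qed
    ultimately have inv_w: "inversions w = insert c (inversions w')"
      using cc inversions_subset_carrier by blast
    have "len (w \<otimes> t) < len w" if t: "t \<in> inversions w" for t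
    proof (cases "t = c")
      case True then show ?thesis using wc len_w by simp
    next
      case False
      then have t': "t \<in> inversions w'" using t inv_w by blast
      have "t \<in> carrier W" using t inversions_subset_carrier by blast
      then have "len (w \<otimes> t) \<le> len (w' \<otimes> t) + 1"
        using len_gen_mult_le[OF s] w' sc by (simp add: w_eq m_assoc)
      then show ?thesis using IH t' len_w by fastforce
    qed
    moreover have "finite (inversions w)" using IH inv_w by simp
    moreover have "card (inversions w) = len w" using IH inv_w c_new len_w by simp
    ultimately show ?thesis by blast
  qed
qed

lemma card_inversions: "w \<in> carrier W \<Longrightarrow> card (inversions w) = len w"
  and len_mult_inversion_less: "w \<in> carrier W \<Longrightarrow> t \<in> inversions w \<Longrightarrow> len (w \<otimes> t) < len w"
  using inversions_card_len by blast+

lemma inversions_inj: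
  assumes x: "x \<in> carrier W" and y: "y \<in> carrier W" and eq: "inversions x = inversions y"
  shows "x = y"
proof -
  have "r \<notin> inversions (y \<otimes> inv x)" if r: "r \<in> carrier W" for r
    using inversions_mult[of y "inv x" r] inversions_inv[OF x r] x y r eq by simp
  then have "inversions (y \<otimes> inv x) = {}" using inversions_subset_carrier by blast
  then have "len (y \<otimes> inv x) = 0" using card_inversions[of "y \<otimes> inv x"] x y by simp
  then have "y \<otimes> inv x = \<one>" using len_eq_0_iff x y by simp
  then have "inv (inv x) = y" using x y by (intro inv_equality) simp_all
  then show ?thesis using x by simp
qed

section \<open>Reflections and the exchange condition\<close>

definition reflection :: "'w \<Rightarrow> bool" where
  "reflection t \<longleftrightarrow> (\<exists>u\<in>carrier W. \<exists>s\<in>S. t = u \<otimes> s \<otimes> inv u)"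

lemma reflection_carrier: "reflection t \<Longrightarrow> t \<in> carrier W"
  using S_carrier by (auto simp: reflection_def)

lemma reflection_involution: "reflection t \<Longrightarrow> t \<otimes> t = \<one>"
proof -
  assume "reflection t"
  then obtain u s where u: "u \<in> carrier W" and s: "s \<in> S" and t: "t = u \<otimes> s \<otimes> inv u"
    by (auto simp: reflection_def)
  have sc: "s \<in> carrier W" using s S_carrier by auto
  have "t \<otimes> t = u \<otimes> (s \<otimes> (inv u \<otimes> u) \<otimes> s) \<otimes> inv u" using u sc by (simp add: t m_assoc)
  then show ?thesis using u sc S_involution[OF s] by simp
qed

lemma reflection_in_inversions: "reflection t \<Longrightarrow> t \<in> inversions t"
proof -
  assume "reflection t"
  then obtain u s where u: "u \<in> carrier W" and s: "s \<in> S" and t: "t = u \<otimes> s \<otimes> inv u"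
    by (auto simp: reflection_def)
  have sc: "s \<in> carrier W" using s S_carrier by auto
  define y where "y = s \<otimes> inv u"
  have yc: "y \<in> carrier W" using u sc by (simp add: y_def)
  have tc: "t \<in> carrier W" using u sc by (simp add: t)
  have t_eq: "t = u \<otimes> y" using u sc by (simp add: t y_def m_assoc)
  have "inv y = u \<otimes> s" using u sc by (simp add: y_def inv_mult_group inv_involution S_involution[OF s])
  then have "y \<otimes> t \<otimes> inv y = s \<otimes> (inv u \<otimes> u) \<otimes> s \<otimes> (inv u \<otimes> u) \<otimes> s"
    using u sc by (simp add: y_def t m_assoc)
  then have conj_y: "y \<otimes> t \<otimes> inv y = s" using u sc S_involution[OF s] by (simp add: m_assoc)
  have conj_u: "inv u \<otimes> t \<otimes> u = s" using u sc by (simp add: t m_assoc)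
  have "t \<in> inversions t \<longleftrightarrow> (t \<in> inversions y) \<noteq> (y \<otimes> t \<otimes> inv y \<in> inversions u)"
    using inversions_mult[OF u yc tc] t_eq by simp
  also have "t \<in> inversions y \<longleftrightarrow> (t \<in> inversions (inv u)) \<noteq> (inv u \<otimes> t \<otimes> u \<in> inversions s)"
    using inversions_mult[of s "inv u" t] u sc tc by (simp add: y_def)
  also have "t \<in> inversions (inv u) \<longleftrightarrow> s \<in> inversions u" using inversions_inv[OF u tc] conj_u by simp
  finally show ?thesis using conj_y conj_u inversions_gen[OF s] by simp
qed

lemma len_mult_reflection_greater:
  assumes w: "w \<in> carrier W" and t: "reflection t" and not_inv: "t \<notin> inversions w"
  shows "len w < len (w \<otimes> t)"
proof -
  have tc: "t \<in> carrier W" and tt: "t \<otimes> t = \<one>"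
    using reflection_carrier[OF t] reflection_involution[OF t] .
  have "t \<otimes> t \<otimes> inv t = t" using tc tt inv_involution by simp
  then have "t \<in> inversions (w \<otimes> t)"
    using inversions_mult[OF w tc tc] reflection_in_inversions[OF t] not_inv by simp
  then have "len (w \<otimes> t \<otimes> t) < len (w \<otimes> t)" using len_mult_inversion_less w tc by simp
  moreover have "w \<otimes> t \<otimes> t = w" using w tc tt by (simp add: m_assoc)
  ultimately show ?thesis by simp
qed

lemma exchange_condition:
  "set bs \<subseteq> S \<Longrightarrow> length bs = len (wprod W bs) \<Longrightarrow> t \<in> inversions (wprod W bs) \<Longrightarrow>
   \<exists>i<length bs. wprod W bs \<otimes> t = wprod W (take i bs @ drop (Suc i) bs)"
proof (induct bs)
  case Nil then show ?case by (simp add: inversions_one)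
next
  case (Cons b bs)
  define y where "y = wprod W bs"
  have b: "b \<in> S" and bs: "set bs \<subseteq> S" using Cons by auto
  have bc: "b \<in> carrier W" using b S_carrier by auto
  have yc: "y \<in> carrier W" using bs S_carrier by (auto simp: y_def)
  have tc: "t \<in> carrier W" using Cons(4) inversions_subset_carrier by blast
  have "length bs = len y"
    using len_gen_mult_le[OF b yc] len_le_length[OF bs] Cons(3) by (simp add: y_def)
  have "t \<in> inversions y \<or> y \<otimes> t \<otimes> inv y = b"
    using inversions_mult[OF bc yc tc] Cons(4) inversions_gen[OF b] by (auto simp: y_def)
  then show ?case
  proof
    assume "t \<in> inversions y"
    then obtain i where i: "i < length bs" "y \<otimes> t = wprod W (take i bs @ drop (Suc i) bs)"
      using Cons(1)[OF bs] \<open>length bs = len y\<close> by (auto simp: y_def)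
    have "wprod W (b # bs) \<otimes> t = b \<otimes> (y \<otimes> t)" using bc yc tc by (simp add: y_def m_assoc)
    then show ?thesis using i by (intro exI[of _ "Suc i"]) simp
  next
    assume "y \<otimes> t \<otimes> inv y = b"
    then have "y \<otimes> t = b \<otimes> y" using yc tc bc by (metis inv_solve_right m_closed)
    then have "b \<otimes> y \<otimes> t = y"
      using bc yc tc involution_cancel[OF bc S_involution[OF b]] by (simp add: m_assoc)
    then show ?thesis by (auto simp: y_def intro!: exI[of _ 0])
  qed
qed

lemma reduced_word_in_subset:
  assumes I: "I \<subseteq> S"
  shows "set bs \<subseteq> I \<Longrightarrow> \<exists>as. set as \<subseteq> I \<and> wprod W as = wprod W bs \<and> length as = len (wprod W bs)"
proof (induct bs)
  case Nil then show ?case by (auto simp: len_one)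
next
  case (Cons b bs)
  define y where "y = wprod W bs"
  have b: "b \<in> S" "b \<in> I" and bs: "set bs \<subseteq> I" using Cons I by auto
  have bc: "b \<in> carrier W" using b S_carrier by auto
  have yc: "y \<in> carrier W" using bs I S_carrier by (auto simp: y_def)
  obtain as where as: "set as \<subseteq> I" "wprod W as = y" "length as = len y"
    using Cons(1)[OF bs] by (auto simp: y_def)
  define t where "t = inv y \<otimes> b \<otimes> y"
  have t: "reflection t"
    unfolding reflection_def t_def using yc b by (intro bexI[of _ "inv y"] bexI[of _ b]) simp_all
  have yt: "y \<otimes> t = b \<otimes> y" using yc bc by (simp add: t_def m_assoc[symmetric])
  show ?case
  proof (cases "t \<in> inversions y")
    case True
    have "set as \<subseteq> S" using as(1) I by auto
    from exchange_condition[OF this as(3)[folded as(2)] True[folded as(2)]]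
    obtain i where i: "i < length as" "y \<otimes> t = wprod W (take i as @ drop (Suc i) as)"
      unfolding as(2) by blast
    define cs where "cs = take i as @ drop (Suc i) as"
    have csI: "set cs \<subseteq> I" using as(1) set_take_subset set_drop_subset by (fastforce simp: cs_def)
    have "len (b \<otimes> y) \<le> length cs" using len_le_length[of cs] csI I i(2) yt by (auto simp: cs_def)
    then have "len (b \<otimes> y) = length cs"
      using len_gen_mult_ge[OF b(1) yc] i as by (simp add: cs_def)
    then show ?thesis using csI i yt by (intro exI[of _ cs]) (simp add: cs_def y_def)
  next
    case False
    then have "len (b \<otimes> y) = len y + 1"
      using len_mult_reflection_greater[OF yc t] yt len_gen_mult_le[OF b(1) yc] by simp
    then show ?thesis using as b by (intro exI[of _ "b # as"]) (simp add: y_def)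
  qed
qed

section \<open>The longest element of a finite parabolic subgroup\<close>

lemma parabolic_subgroup: "I \<subseteq> S \<Longrightarrow> subgroup (generate W I) W"
  using generate_is_subgroup[of I] S_carrier by blast

lemma parabolic_subset_carrier: "I \<subseteq> S \<Longrightarrow> generate W I \<subseteq> carrier W"
  using parabolic_subgroup subgroup.subset by blast

lemma parabolic_eq_wprod: "I \<subseteq> S \<Longrightarrow> generate W I = {wprod W as | as. set as \<subseteq> I}"
  using generate_involutions_eq_wprod[of I] S_carrier S_involution by blast

definition parabolic_reflections :: "'w set \<Rightarrow> 'w set" where
  "parabolic_reflections I = {u \<otimes> s \<otimes> inv u | u s. u \<in> generate W I \<and> s \<in> I}"

lemma parabolic_reflection:
  assumes I: "I \<subseteq> S" and t: "t \<in> parabolic_reflections I"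
  shows "reflection t" "t \<in> generate W I"
proof -
  obtain u s where us: "u \<in> generate W I" "s \<in> I" "t = u \<otimes> s \<otimes> inv u"
    using t by (auto simp: parabolic_reflections_def)
  then show "reflection t" using I parabolic_subset_carrier by (auto simp: reflection_def)
  show "t \<in> generate W I"
    using us parabolic_subgroup[OF I] by (auto intro: subgroup.m_closed subgroup.m_inv_closed generate.incl)
qed

lemma parabolic_reflections_conj:
  assumes I: "I \<subseteq> S" and v: "v \<in> generate W I" and x: "x \<in> carrier W"
  shows "v \<otimes> x \<otimes> inv v \<in> parabolic_reflections I \<longleftrightarrow> x \<in> parabolic_reflections I"
proof -
  have closed: "v \<otimes> x \<otimes> inv v \<in> parabolic_reflections I"
    if v: "v \<in> generate W I" and x: "x \<in> parabolic_reflections I" for v x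
  proof -
    obtain u s where us: "u \<in> generate W I" "s \<in> I" "x = u \<otimes> s \<otimes> inv u"
      using x by (auto simp: parabolic_reflections_def)
    have "u \<in> carrier W" "v \<in> carrier W" "s \<in> carrier W"
      using us v I S_carrier parabolic_subset_carrier by auto
    then have "v \<otimes> x \<otimes> inv v = (v \<otimes> u) \<otimes> s \<otimes> inv (v \<otimes> u)"
      by (simp add: us inv_mult_group m_assoc)
    moreover have "v \<otimes> u \<in> generate W I"
      using v us parabolic_subgroup[OF I] by (auto intro: subgroup.m_closed)
    ultimately show ?thesis using us by (auto simp: parabolic_reflections_def)
  qed
  show ?thesis
  proof
    assume "v \<otimes> x \<otimes> inv v \<in> parabolic_reflections I"
    moreover have "inv v \<in> generate W I"
      using v parabolic_subgroup[OF I] by (auto intro: subgroup.m_inv_closed)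
    ultimately have "inv v \<otimes> (v \<otimes> x \<otimes> inv v) \<otimes> inv (inv v) \<in> parabolic_reflections I"
      using closed by blast
    moreover have "v \<in> carrier W" using v parabolic_subset_carrier[OF I] by auto
    ultimately show "x \<in> parabolic_reflections I" using x by (simp add: m_assoc)
  qed (rule closed[OF v])
qed

lemma inversions_parabolic:
  assumes I: "I \<subseteq> S" and u: "u \<in> generate W I"
  shows "inversions u \<subseteq> parabolic_reflections I"
proof -
  obtain as where as: "set as \<subseteq> I" "u = wprod W as" using u parabolic_eq_wprod[OF I] by auto
  have "inversions (wprod W as) \<subseteq> parabolic_reflections I" using as(1)
  proof (induct as)
    case Nil then show ?case by (simp add: inversions_one)
  next
    case (Cons a as)
    define y where "y = wprod W as"
    have a: "a \<in> S" "a \<in> I" and asI: "set as \<subseteq> I" using Cons I by auto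
    have ac: "a \<in> carrier W" using a S_carrier by auto
    have yI: "y \<in> generate W I" using asI parabolic_eq_wprod[OF I] by (auto simp: y_def)
    have yc: "y \<in> carrier W" using yI parabolic_subset_carrier[OF I] by auto
    show ?case
    proof
      fix r assume r: "r \<in> inversions (wprod W (a # as))"
      have rc: "r \<in> carrier W" using r inversions_subset_carrier by blast
      have "r \<in> inversions y \<or> y \<otimes> r \<otimes> inv y = a"
        using inversions_mult[OF ac yc rc] r inversions_gen[OF a(1)] by (auto simp: y_def)
      then show "r \<in> parabolic_reflections I"
      proof
        assume "r \<in> inversions y" then show ?thesis using Cons(1)[OF asI] by (auto simp: y_def)
      next
        assume "y \<otimes> r \<otimes> inv y = a"
        then have "r = inv y \<otimes> a \<otimes> y" using conj_eq_iff[of y "inv y" r a] yc rc ac by simp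
        moreover have "inv y \<in> generate W I"
          using yI parabolic_subgroup[OF I] by (auto intro: subgroup.m_inv_closed)
        ultimately show ?thesis using a yc unfolding parabolic_reflections_def
          by (intro CollectI exI[of _ "inv y"] exI[of _ a]) simp
      qed
    qed
  qed
  then show ?thesis using as by simp
qed

lemma inversions_of_maximal_length:
  assumes I: "I \<subseteq> S" and w: "w \<in> generate W I" and max: "\<forall>v\<in>generate W I. len v \<le> len w"
  shows "inversions w = parabolic_reflections I"
proof
  show "inversions w \<subseteq> parabolic_reflections I" by (rule inversions_parabolic[OF I w])
  show "parabolic_reflections I \<subseteq> inversions w"
  proof
    fix t assume t: "t \<in> parabolic_reflections I"
    show "t \<in> inversions w"
    proof (rule ccontr)
      assume "t \<notin> inversions w"
      moreover have "w \<in> carrier W" using w parabolic_subset_carrier[OF I] by auto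
      ultimately have "len w < len (w \<otimes> t)"
        using len_mult_reflection_greater parabolic_reflection[OF I t] by blast
      moreover have "w \<otimes> t \<in> generate W I"
        using w parabolic_reflection[OF I t] parabolic_subgroup[OF I] by (auto intro: subgroup.m_closed)
      ultimately show False using max by fastforce
    qed
  qed
qed

lemma maximal_length_unique:
  assumes I: "I \<subseteq> S"
    and "v \<in> generate W I" "\<forall>x\<in>generate W I. len x \<le> len v"
    and "w \<in> generate W I" "\<forall>x\<in>generate W I. len x \<le> len w"
  shows "v = w"
proof (rule inversions_inj)
  show "v \<in> carrier W" "w \<in> carrier W" using assms parabolic_subset_carrier[OF I] by auto
  show "inversions v = inversions w" using assms inversions_of_maximal_length[OF I] by simp
qed

lemma longest:
  assumes I: "I \<subseteq> S" and fin: "finite (generate W I)"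
  shows "longest W S I \<in> generate W I" "\<forall>v\<in>generate W I. len v \<le> len (longest W S I)"
proof -
  have "len ` generate W I \<noteq> {}" using generate.one by blast
  then have "Max (len ` generate W I) \<in> len ` generate W I" by (rule Max_in[OF finite_imageI[OF fin]])
  then obtain w where w: "w \<in> generate W I" "len w = Max (len ` generate W I)" by auto
  have max: "\<forall>v\<in>generate W I. len v \<le> len w" using w fin by simp
  have "longest W S I = w" unfolding longest_def
  proof (rule the_equality)
    show "w \<in> generate W I \<and> (\<forall>v\<in>generate W I. len v \<le> len w)" using w max by blast
    fix w' assume "w' \<in> generate W I \<and> (\<forall>v\<in>generate W I. len v \<le> len w')"
    then show "w' = w" using maximal_length_unique[OF I _ _ w(1) max] by blast
  qed
  then show "longest W S I \<in> generate W I" "\<forall>v\<in>generate W I. len v \<le> len (longest W S I)"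
    using w max by simp_all
qed

lemma longest_carrier: "I \<subseteq> S \<Longrightarrow> finite (generate W I) \<Longrightarrow> longest W S I \<in> carrier W"
  using longest parabolic_subset_carrier by blast

lemma longest_involution:
  assumes I: "I \<subseteq> S" and fin: "finite (generate W I)"
  shows "longest W S I \<otimes> longest W S I = \<one>"
proof -
  define w where "w = longest W S I"
  have w: "w \<in> carrier W" "w \<in> generate W I" "\<forall>v\<in>generate W I. len v \<le> len w"
    using longest[OF I fin] longest_carrier[OF I fin] by (simp_all add: w_def)
  have "inv w \<in> generate W I" using w parabolic_subgroup[OF I] by (auto intro: subgroup.m_inv_closed)
  moreover have "\<forall>v\<in>generate W I. len v \<le> len (inv w)" using w(3) len_inv[OF w(1)] by simp
  ultimately have "inv w = w" by (rule maximal_length_unique[OF I _ _ w(2,3)])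
  then show ?thesis using r_inv[OF w(1)] by (simp add: w_def[symmetric])
qed

text \<open>\<open>r = w\<^sub>I s w\<^sub>I\<close> has the single inversion \<open>r\<close>, because \<open>w\<^sub>I r = s w\<^sub>I\<close> and both \<open>w\<^sub>I\<close> and
conjugation by \<open>r \<in> W\<^sub>I\<close> preserve the reflections of \<open>W\<^sub>I\<close>. So \<open>r\<close> has length 1, and a reduced
word for it inside \<open>I\<close> is a single letter.\<close>

lemma longest_conj_mem:
  assumes I: "I \<subseteq> S" and fin: "finite (generate W I)" and s: "s \<in> I"
  shows "longest W S I \<otimes> s \<otimes> longest W S I \<in> I"
proof -
  define w where "w = longest W S I"
  have wc: "w \<in> carrier W" and ww: "w \<otimes> w = \<one>" and wI: "w \<in> generate W I"
    using longest_carrier[OF I fin] longest_involution[OF I fin] longest[OF I fin] by (simp_all add: w_def)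
  have iw: "inv w = w" using inv_involution[OF wc ww] .
  have sS: "s \<in> S" and sc: "s \<in> carrier W" using s I S_carrier by auto
  define r where "r = w \<otimes> s \<otimes> w"
  have rc: "r \<in> carrier W" using wc sc by (simp add: r_def)
  have rI: "r \<in> generate W I"
    using wI s parabolic_subgroup[OF I] by (auto simp: r_def intro: subgroup.m_closed generate.incl)
  have inv_w: "inversions w = parabolic_reflections I"
    using inversions_of_maximal_length[OF I] longest[OF I fin] by (simp add: w_def)
  have wr: "w \<otimes> r = s \<otimes> w" using wc sc ww by (simp add: r_def m_assoc[symmetric])
  have "x \<in> inversions r \<longleftrightarrow> x = r" if x: "x \<in> carrier W" for x
  proof -
    have "x \<in> inversions (w \<otimes> r) \<longleftrightarrow> (x \<in> inversions r) \<noteq> (x \<in> parabolic_reflections I)"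
      using inversions_mult[OF wc rc x] inv_w parabolic_reflections_conj[OF I rI x] by simp
    moreover have "x \<in> inversions (s \<otimes> w) \<longleftrightarrow> (x \<in> parabolic_reflections I) \<noteq> (x = r)"
      using inversions_mult[OF sc wc x] inv_w conj_eq_iff[of w w x s] wc x sc ww iw inversions_gen[OF sS]
      by (simp add: r_def)
    ultimately show ?thesis using wr by auto
  qed
  then have "inversions r = {r}" using rc inversions_subset_carrier[of r] by blast
  then have len_r: "len r = 1" using card_inversions[OF rc] by simp
  obtain bs where bs: "set bs \<subseteq> I" "r = wprod W bs" using rI parabolic_eq_wprod[OF I] by auto
  obtain as where as: "set as \<subseteq> I" "wprod W as = r" "length as = 1"
    using reduced_word_in_subset[OF I bs(1)] bs(2) len_r by auto
  then obtain a where "as = [a]" by (cases as) auto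
  then show ?thesis using as I S_carrier by (auto simp: w_def[symmetric] r_def[symmetric])
qed

section \<open>Conjugation by \<open>w\<^sub>I\<close> on connected subsets\<close>

lemma conn_D: "I \<in> conn W S \<Longrightarrow> I \<noteq> {} \<and> I \<subseteq> S \<and> finite (generate W I)"
  by (simp add: conn_def connected_subset_def)

lemma finite_conn: "finite (conn W S)"
proof -
  have "conn W S \<subseteq> Pow S" by (auto simp: conn_def connected_subset_def)
  then show ?thesis using finite_S finite_subset by blast
qed

lemma inj_on_conj: "w \<in> carrier W \<Longrightarrow> inj_on (\<lambda>s. w \<otimes> s \<otimes> inv w) (carrier W)"
  by (auto intro!: inj_onI)

lemma commuting_split_conj:
  assumes w: "w \<in> carrier W" and A: "A \<subseteq> carrier W" and B: "B \<subseteq> carrier W"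
    and split: "commuting_split W A B"
  shows "commuting_split W ((\<lambda>s. w \<otimes> s \<otimes> inv w) ` A) ((\<lambda>s. w \<otimes> s \<otimes> inv w) ` B)"
  unfolding commuting_split_def
proof (intro conjI ballI)
  from inj_on_image_Int[OF inj_on_conj[OF w] A B]
  show "(\<lambda>s. w \<otimes> s \<otimes> inv w) ` A \<inter> (\<lambda>s. w \<otimes> s \<otimes> inv w) ` B = {}"
    using split by (simp add: commuting_split_def)
next
  fix x y assume "x \<in> (\<lambda>s. w \<otimes> s \<otimes> inv w) ` A" "y \<in> (\<lambda>s. w \<otimes> s \<otimes> inv w) ` B"
  then obtain a b where ab: "a \<in> A" "b \<in> B" "x = w \<otimes> a \<otimes> inv w" "y = w \<otimes> b \<otimes> inv w" by blast
  have "x \<otimes> y = w \<otimes> (a \<otimes> b) \<otimes> inv w" "y \<otimes> x = w \<otimes> (b \<otimes> a) \<otimes> inv w"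
    using ab(1,2) A B w by (simp_all add: ab(3,4) subset_iff m_assoc)
  moreover have "a \<otimes> b = b \<otimes> a" using split ab(1,2) unfolding commuting_split_def by blast
  ultimately show "x \<otimes> y = y \<otimes> x" by simp
qed

lemma no_commuting_split_conj:
  assumes w: "w \<in> carrier W" and J: "J \<subseteq> carrier W"
    and no_split: "\<not> (\<exists>A B. A \<noteq> {} \<and> B \<noteq> {} \<and> (\<lambda>s. w \<otimes> s \<otimes> inv w) ` J = A \<union> B \<and> commuting_split W A B)"
  shows "\<not> (\<exists>A B. A \<noteq> {} \<and> B \<noteq> {} \<and> J = A \<union> B \<and> commuting_split W A B)"
proof
  assume "\<exists>A B. A \<noteq> {} \<and> B \<noteq> {} \<and> J = A \<union> B \<and> commuting_split W A B"
  then obtain A B where AB: "A \<noteq> {}" "B \<noteq> {}" "J = A \<union> B" "commuting_split W A B" by blast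
  define c where "c = (\<lambda>s. w \<otimes> s \<otimes> inv w)"
  have "A \<subseteq> carrier W" "B \<subseteq> carrier W" using AB(3) J by auto
  from commuting_split_conj[OF w this AB(4)] have "commuting_split W (c ` A) (c ` B)"
    unfolding c_def .
  moreover have "c ` A \<noteq> {}" "c ` B \<noteq> {}" "c ` J = c ` A \<union> c ` B" using AB by auto
  ultimately have "\<exists>A B. A \<noteq> {} \<and> B \<noteq> {} \<and> c ` J = A \<union> B \<and> commuting_split W A B"
    by (intro exI[of _ "c ` A"] exI[of _ "c ` B"]) simp
  then show False using no_split unfolding c_def by contradiction
qed

lemma conj_set_conj_set:
  assumes I: "I \<in> conn W S" and J: "J \<subseteq> I"
  shows "conj_set W S I (conj_set W S I J) = J"
proof -
  define w where "w = longest W S I"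
  have "w \<in> carrier W" "w \<otimes> w = \<one>"
    using conn_D[OF I] longest_carrier longest_involution by (auto simp: w_def)
  then have "w \<otimes> (w \<otimes> s \<otimes> w) \<otimes> w = s" if "s \<in> carrier W" for s
    using that by (simp add: m_assoc involution_cancel)
  moreover have "J \<subseteq> carrier W" using J conn_D[OF I] S_carrier by auto
  ultimately show ?thesis
    unfolding conj_set_def w_def[symmetric] image_image by (simp add: subset_iff cong: image_cong)
qed

lemma conj_set_subset: "I \<in> conn W S \<Longrightarrow> J \<subseteq> I \<Longrightarrow> conj_set W S I J \<subseteq> I"
  unfolding conj_set_def using conn_D longest_conj_mem by blast

lemma conj_set_Csub:
  assumes I: "I \<in> conn W S" and J: "J \<in> Csub W S I"
  shows "conj_set W S I J \<in> Csub W S I"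
proof -
  define w where "w = longest W S I"
  define c where "c = (\<lambda>s. w \<otimes> s \<otimes> inv w)"
  have "w \<in> carrier W" "w \<otimes> w = \<one>"
    using conn_D[OF I] longest_carrier longest_involution by (auto simp: w_def)
  then have w: "w \<in> carrier W" "inv w = w" using inv_involution by auto
  have J_conn: "J \<in> conn W S" and JI: "J \<subset> I" using J by (auto simp: Csub_def)
  have IW: "I \<subseteq> carrier W" using conn_D[OF I] S_carrier by auto
  define J' where "J' = conj_set W S I J"
  have J'_eq: "J' = c ` J" by (simp add: J'_def conj_set_def c_def w_def[symmetric] w(2))
  have J'I: "J' \<subseteq> I" using conj_set_subset[OF I] JI J'_def by auto
  have J_eq: "J = c ` J'"
    using conj_set_conj_set[OF I] JI by (simp add: J'_def conj_set_def c_def w_def[symmetric] w(2))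
  have no_split_J: "\<not> (\<exists>A B. A \<noteq> {} \<and> B \<noteq> {} \<and> J = A \<union> B \<and> commuting_split W A B)"
    using J_conn unfolding conn_def connected_subset_def mem_Collect_eq by (elim conjE)
  have no_split: "\<not> (\<exists>A B. A \<noteq> {} \<and> B \<noteq> {} \<and> J' = A \<union> B \<and> commuting_split W A B)"
    by (rule no_commuting_split_conj[OF w(1) _ no_split_J[unfolded J_eq c_def]]) (use J'I IW in auto)
  have "J' \<noteq> I"
  proof
    assume J'_I: "J' = I"
    have "inj_on c I" unfolding c_def using inj_on_subset[OF inj_on_conj[OF w(1)] IW] .
    then have "card (c ` I) = card I" by (rule card_image)
    moreover have "finite I" using conn_D[OF I] finite_S finite_subset by blast
    moreover have "c ` I \<subseteq> I" using J_eq J'_I JI by auto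
    ultimately have "c ` I = I" by (simp add: card_subset_eq)
    then show False using J_eq J'_I JI by simp
  qed
  moreover have "J' \<in> conn W S"
  proof -
    have "finite (generate W J')" using mono_generate[OF J'I] conn_D[OF I] finite_subset by blast
    moreover have "J' \<noteq> {}" using conn_D[OF J_conn] J'_eq by auto
    moreover have "J' \<subseteq> S" using J'I conn_D[OF I] by auto
    ultimately show ?thesis using no_split by (simp add: conn_def connected_subset_def)
  qed
  ultimately show ?thesis using J'I by (auto simp: Csub_def J'_def)
qed

end

section \<open>The map \<open>\<rho>\<^sub>I\<close> on the basis\<close>

lemma sum_apply: "(sum f A) x = (\<Sum>a\<in>A. f a x)"
  by (induct A rule: infinite_finite_induct) auto

interpretation rvec: Modules.module "\<lambda>(c::real) (v::'a \<Rightarrow> real) J. c * v J"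
  by unfold_locales (auto simp: fun_eq_iff algebra_simps)

lemma Espace_subspace: "rvec.subspace (Espace W S)"
  unfolding rvec.subspace_def by (auto simp: Espace_def)

lemma eps_Espace: "J \<in> conn W S \<Longrightarrow> eps J \<in> Espace W S"
  by (auto simp: Espace_def eps_def)

lemma Espace_eq_sum_eps:
  assumes fin: "finite (conn W S)" and v: "v \<in> Espace W S"
  shows "v = (\<Sum>J\<in>conn W S. (\<lambda>L. v J * eps J L))"
proof
  fix L
  have "(\<Sum>J\<in>conn W S. (\<lambda>L. v J * eps J L)) L = (\<Sum>J\<in>conn W S. if L = J then v J else 0)"
    by (simp add: sum_apply eps_def if_distrib cong: if_cong)
  also have "\<dots> = v L" using fin v by (simp add: sum.delta Espace_def)
  finally show "v L = (\<Sum>J\<in>conn W S. (\<lambda>L. v J * eps J L)) L" by simp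
qed

lemma B0_eps: "finite (conn W S) \<Longrightarrow> K \<in> conn W S \<Longrightarrow> B0 W S f (eps K) = f K"
  by (simp add: B0_def eps_def if_distrib cong: if_cong)

lemma B0_self_eq_0:
  assumes fin: "finite (conn W S)" and v: "v \<in> Espace W S" and "B0 W S v v = 0"
  shows "v = 0"
proof -
  have "\<forall>J\<in>conn W S. v J * v J = 0"
    using assms sum_nonneg_eq_0_iff[OF fin, of "\<lambda>J. v J * v J"] by (simp add: B0_def)
  then show ?thesis using v by (auto simp: Espace_def fun_eq_iff)
qed

definition E_I_gens :: "'w monoid \<Rightarrow> 'w set \<Rightarrow> 'w set \<Rightarrow> 'w vec set" where
  "E_I_gens W S I = (\<lambda>J. eps J - eps (conj_set W S I J)) ` Csub W S I"

lemma U_I_eq_span: "U_I W S I = rvec.span (insert (eps I) (E_I_gens W S I))"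
proof -
  have "U_I W S I = {x. \<exists>k. x - (\<lambda>L. k * eps I L) \<in> rvec.span (E_I_gens W S I)}"
  proof (intro Set.set_eqI iffI)
    fix x assume "x \<in> U_I W S I"
    then obtain c e where "e \<in> E_I W S I" "x = (\<lambda>L. c * eps I L) + e" by (auto simp: U_I_def)
    then show "x \<in> {x. \<exists>k. x - (\<lambda>L. k * eps I L) \<in> rvec.span (E_I_gens W S I)}"
      by (auto simp: E_I_def vspan_def E_I_gens_def intro!: exI[of _ c])
  next
    fix x assume "x \<in> {x. \<exists>k. x - (\<lambda>L. k * eps I L) \<in> rvec.span (E_I_gens W S I)}"
    then obtain k where "x - (\<lambda>L. k * eps I L) \<in> rvec.span (E_I_gens W S I)" by blast
    moreover have "x = (\<lambda>L. k * eps I L) + (x - (\<lambda>L. k * eps I L))" by simp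
    ultimately show "x \<in> U_I W S I" unfolding U_I_def E_I_def vspan_def E_I_gens_def by blast
  qed
  then show ?thesis by (simp add: rvec.span_insert)
qed

lemma U_I_subspace: "rvec.subspace (U_I W S I)"
  by (simp add: U_I_eq_span)

lemma F_I_subspace: "rvec.subspace (F_I W S I)"
proof (rule rvec.subspaceI)
  show "0 \<in> F_I W S I" by (simp add: F_I_def Espace_def B0_def)
next
  fix x y assume "x \<in> F_I W S I" "y \<in> F_I W S I"
  then show "x + y \<in> F_I W S I" by (simp add: F_I_def Espace_def B0_def sum.distrib distrib_right)
next
  fix c x assume "x \<in> F_I W S I"
  then show "(\<lambda>L. c * x L) \<in> F_I W S I" by (simp add: F_I_def Espace_def B0_def mult.assoc sum_distrib_left[symmetric])
qed

definition rho_basis :: "'w monoid \<Rightarrow> 'w set \<Rightarrow> 'w set \<Rightarrow> 'w set \<Rightarrow> 'w vec" where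
  "rho_basis W S I J =
     (if J = I then - eps I else if J \<in> Csub W S I then eps (conj_set W S I J) else eps J)"

definition linear_on :: "('a \<Rightarrow> real) set \<Rightarrow> (('a \<Rightarrow> real) \<Rightarrow> 'a \<Rightarrow> real) \<Rightarrow> bool" where
  "linear_on V g \<longleftrightarrow> (\<forall>v\<in>V. \<forall>w\<in>V. \<forall>c. g ((\<lambda>L. c * v L) + w) = (\<lambda>L. c * g v L) + g w)"

context
  fixes W :: "'w monoid" and S :: "'w set" and I :: "'w set"
  assumes finite_conn: "finite (conn W S)" and I_conn: "I \<in> conn W S"
    and conj_set_Csub: "\<And>J. J \<in> Csub W S I \<Longrightarrow> conj_set W S I J \<in> Csub W S I"
    and conj_set_involutive: "\<And>J. J \<in> Csub W S I \<Longrightarrow> conj_set W S I (conj_set W S I J) = J"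
begin

lemma Csub_conn: "J \<in> Csub W S I \<Longrightarrow> J \<in> conn W S"
  by (simp add: Csub_def)

lemma U_I_subset_Espace: "U_I W S I \<subseteq> Espace W S"
  unfolding U_I_eq_span
proof (rule rvec.span_minimal[OF _ Espace_subspace])
  show "insert (eps I) (E_I_gens W S I) \<subseteq> Espace W S"
  proof -
    have "eps J - eps (conj_set W S I J) \<in> Espace W S" if "J \<in> Csub W S I" for J
      using that by (intro rvec.subspace_diff[OF Espace_subspace] eps_Espace Csub_conn conj_set_Csub)
    then show ?thesis using eps_Espace[OF I_conn] by (auto simp: E_I_gens_def)
  qed
qed

lemma F_I_memI:
  assumes f: "f \<in> Espace W S" and fI: "f I = 0"
    and fK: "\<And>K. K \<in> Csub W S I \<Longrightarrow> f K = f (conj_set W S I K)"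
  shows "f \<in> F_I W S I"
proof -
  have "rvec.subspace {u. B0 W S f u = 0}"
    by (rule rvec.subspaceI)
       (auto simp: B0_def sum.distrib distrib_left mult.left_commute sum_distrib_left[symmetric])
  moreover have "insert (eps I) (E_I_gens W S I) \<subseteq> {u. B0 W S f u = 0}"
  proof -
    have "B0 W S f (eps K - eps (conj_set W S I K)) = 0" if K: "K \<in> Csub W S I" for K
    proof -
      have "B0 W S f (eps K - eps (conj_set W S I K)) = B0 W S f (eps K) - B0 W S f (eps (conj_set W S I K))"
        by (simp add: B0_def sum_subtractf right_diff_distrib)
      then show ?thesis
        using fK[OF K] B0_eps[OF finite_conn] Csub_conn[OF K] Csub_conn[OF conj_set_Csub[OF K]] by simp
    qed
    then show ?thesis using fI B0_eps[OF finite_conn I_conn] by (auto simp: E_I_gens_def)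
  qed
  ultimately have "\<forall>u\<in>U_I W S I. B0 W S f u = 0" unfolding U_I_eq_span using rvec.span_minimal by blast
  then show ?thesis using f by (simp add: F_I_def)
qed

text \<open>\<open>U\<^sub>I\<close> and \<open>F\<^sub>I\<close> are \<open>B\<^sub>0\<close>-orthogonal, so the decomposition defining \<open>rho_I\<close> is unique.\<close>

lemma rho_I_decomp:
  assumes u: "u \<in> U_I W S I" and f: "f \<in> F_I W S I"
  shows "rho_I W S I (u + f) = f - u"
  unfolding rho_I_def
proof (rule the_equality)
  show "\<exists>u'\<in>U_I W S I. \<exists>f'\<in>F_I W S I. u + f = u' + f' \<and> f - u = f' - u'" using u f by blast
next
  fix w assume "\<exists>u'\<in>U_I W S I. \<exists>f'\<in>F_I W S I. u + f = u' + f' \<and> w = f' - u'"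
  then obtain u' f' where u': "u' \<in> U_I W S I" and f': "f' \<in> F_I W S I"
    and eq: "u + f = u' + f'" "w = f' - u'" by blast
  define d where "d = f' - f"
  have "d = u - u'" using eq by (simp add: d_def algebra_simps)
  then have "d \<in> U_I W S I" using rvec.subspace_diff[OF U_I_subspace u u'] by simp
  moreover have "d \<in> F_I W S I" using rvec.subspace_diff[OF F_I_subspace f' f] by (simp add: d_def)
  ultimately have "d = 0" using B0_self_eq_0[OF finite_conn] by (simp add: F_I_def)
  then show "w = f - u" using eq \<open>d = u - u'\<close> by (simp add: d_def)
qed

lemma eps_decomp_Csub:
  assumes J: "J \<in> Csub W S I"
  shows "\<exists>u\<in>U_I W S I. \<exists>f\<in>F_I W S I. eps J = u + f \<and> f - u = eps (conj_set W S I J)"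
proof -
  define J' where "J' = conj_set W S I J"
  have J': "J' \<in> Csub W S I" "J' \<noteq> I" "J \<noteq> I"
    using conj_set_Csub[OF J] J by (auto simp: J'_def Csub_def)
  define u where "u = (\<lambda>L. 1/2 * (eps J - eps J') L)"
  define f where "f = (\<lambda>L. 1/2 * (eps J + eps J') L)"
  have "eps J - eps J' \<in> U_I W S I" unfolding U_I_eq_span E_I_gens_def J'_def
    by (rule rvec.span_base) (use J in blast)
  then have "u \<in> U_I W S I" unfolding u_def by (rule rvec.subspace_scale[OF U_I_subspace])
  moreover have "f \<in> F_I W S I"
  proof (rule F_I_memI)
    show "f \<in> Espace W S"
      using Csub_conn[OF J] Csub_conn[OF J'(1)] by (auto simp: f_def Espace_def eps_def)
    show "f I = 0" using J'(2,3) by (simp add: f_def eps_def)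
    fix K assume K: "K \<in> Csub W S I"
    have "conj_set W S I K = J \<longleftrightarrow> K = J'" "conj_set W S I K = J' \<longleftrightarrow> K = J"
      using conj_set_involutive K J unfolding J'_def by metis+
    then show "f K = f (conj_set W S I K)" by (auto simp: f_def eps_def)
  qed
  moreover have "eps J = u + f" "f - u = eps J'" by (simp_all add: u_def f_def fun_eq_iff algebra_simps)
  ultimately show ?thesis unfolding J'_def by blast
qed

lemma eps_decomp:
  assumes J: "J \<in> conn W S"
  shows "\<exists>u\<in>U_I W S I. \<exists>f\<in>F_I W S I. eps J = u + f \<and> f - u = rho_basis W S I J"
proof -
  consider "J = I" | "J \<in> Csub W S I" | "J \<noteq> I" "J \<notin> Csub W S I" by blast
  then show ?thesis
  proof cases
    case 1
    have "eps I \<in> U_I W S I" by (simp add: U_I_eq_span rvec.span_base)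
    then show ?thesis using 1 rvec.subspace_0[OF F_I_subspace]
      by (intro bexI[of _ "eps I"] bexI[of _ 0]) (simp_all add: rho_basis_def)
  next
    case 2
    then show ?thesis using eps_decomp_Csub[OF 2] by (auto simp: rho_basis_def Csub_def)
  next
    case 3
    have "eps J \<in> F_I W S I"
    proof (rule F_I_memI)
      show "eps J \<in> Espace W S" by (rule eps_Espace[OF J])
      show "eps J I = 0" using 3 by (simp add: eps_def)
      fix K assume "K \<in> Csub W S I"
      then show "eps J K = eps J (conj_set W S I K)"
        using 3 conj_set_Csub by (auto simp: eps_def)
    qed
    then show ?thesis using 3 rvec.subspace_0[OF U_I_subspace]
      by (intro bexI[of _ 0] bexI[of _ "eps J"]) (simp_all add: rho_basis_def)
  qed
qed

lemma rho_I_eps: "J \<in> conn W S \<Longrightarrow> rho_I W S I (eps J) = rho_basis W S I J"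
  using eps_decomp rho_I_decomp by metis

lemma Espace_decomp:
  assumes v: "v \<in> Espace W S"
  shows "\<exists>u\<in>U_I W S I. \<exists>f\<in>F_I W S I. v = u + f"
proof -
  obtain u f where uf: "\<And>J. J \<in> conn W S \<Longrightarrow> u J \<in> U_I W S I \<and> f J \<in> F_I W S I \<and> eps J = u J + f J"
    using eps_decomp by metis
  have "(\<Sum>J\<in>conn W S. (\<lambda>L. v J * u J L)) \<in> U_I W S I"
    by (rule rvec.subspace_sum[OF U_I_subspace]) (use uf rvec.subspace_scale[OF U_I_subspace] in blast)
  moreover have "(\<Sum>J\<in>conn W S. (\<lambda>L. v J * f J L)) \<in> F_I W S I"
    by (rule rvec.subspace_sum[OF F_I_subspace]) (use uf rvec.subspace_scale[OF F_I_subspace] in blast)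
  moreover have "v = (\<Sum>J\<in>conn W S. (\<lambda>L. v J * u J L)) + (\<Sum>J\<in>conn W S. (\<lambda>L. v J * f J L))"
  proof -
    have "(\<Sum>J\<in>conn W S. (\<lambda>L. v J * u J L)) + (\<Sum>J\<in>conn W S. (\<lambda>L. v J * f J L)) =
        (\<Sum>J\<in>conn W S. (\<lambda>L. v J * u J L) + (\<lambda>L. v J * f J L))"
      by (simp add: sum.distrib)
    also have "\<dots> = (\<Sum>J\<in>conn W S. (\<lambda>L. v J * eps J L))"
      by (rule sum.cong) (simp_all add: uf fun_eq_iff distrib_left)
    finally show ?thesis using Espace_eq_sum_eps[OF finite_conn v] by simp
  qed
  ultimately show ?thesis by blast
qed

lemma rho_I_Espace:
  assumes v: "v \<in> Espace W S" shows "rho_I W S I v \<in> Espace W S"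
proof -
  obtain u f where uf: "u \<in> U_I W S I" "f \<in> F_I W S I" "v = u + f"
    using Espace_decomp[OF v] by blast
  then have "u \<in> Espace W S" "f \<in> Espace W S" using U_I_subset_Espace by (auto simp: F_I_def)
  then show ?thesis using rho_I_decomp[OF uf(1,2)] uf(3) rvec.subspace_diff[OF Espace_subspace] by simp
qed

lemma rho_I_linear_on: "linear_on (Espace W S) (rho_I W S I)"
  unfolding linear_on_def
proof (intro ballI allI)
  fix v w c assume "v \<in> Espace W S" "w \<in> Espace W S"
  then obtain u f u' f' where uf: "u \<in> U_I W S I" "f \<in> F_I W S I" "v = u + f"
    and uf': "u' \<in> U_I W S I" "f' \<in> F_I W S I" "w = u' + f'"
    using Espace_decomp by metis
  have "(\<lambda>L. c * v L) + w = ((\<lambda>L. c * u L) + u') + ((\<lambda>L. c * f L) + f')"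
    using uf(3) uf'(3) by (simp add: fun_eq_iff algebra_simps)
  moreover have "(\<lambda>L. c * u L) + u' \<in> U_I W S I"
    by (intro rvec.subspace_add[OF U_I_subspace] rvec.subspace_scale[OF U_I_subspace] uf(1) uf'(1))
  moreover have "(\<lambda>L. c * f L) + f' \<in> F_I W S I"
    by (intro rvec.subspace_add[OF F_I_subspace] rvec.subspace_scale[OF F_I_subspace] uf(2) uf'(2))
  ultimately have "rho_I W S I ((\<lambda>L. c * v L) + w) = ((\<lambda>L. c * f L) + f') - ((\<lambda>L. c * u L) + u')"
    using rho_I_decomp by simp
  also have "\<dots> = (\<lambda>L. c * (f - u) L) + (f' - u')" by (simp add: fun_eq_iff algebra_simps)
  also have "\<dots> = (\<lambda>L. c * rho_I W S I v L) + rho_I W S I w"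
    using rho_I_decomp uf uf' by simp
  finally show "rho_I W S I ((\<lambda>L. c * v L) + w) = (\<lambda>L. c * rho_I W S I v L) + rho_I W S I w" .
qed

end

section \<open>Signed permutations of the basis\<close>

lemma linear_on_zero:
  assumes "rvec.subspace V" "linear_on V g"
  shows "g 0 = 0"
proof
  fix x
  have "g 0 = g ((\<lambda>L. (-1) * 0 L) + 0)" by (rule arg_cong[where f = g]) (simp add: fun_eq_iff)
  also have "\<dots> = (\<lambda>L. (-1) * g 0 L) + g 0"
    using assms rvec.subspace_0 unfolding linear_on_def by blast
  finally show "g 0 x = 0 x" by (drule_tac x = x in fun_cong) simp
qed

lemma linear_on_neg:
  assumes V: "rvec.subspace V" and g: "linear_on V g" and v: "v \<in> V"
  shows "g (- v) = - g v"
proof -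
  have "g (- v) = g ((\<lambda>L. (-1) * v L) + 0)" by (rule arg_cong[where f = g]) (simp add: fun_eq_iff)
  also have "\<dots> = (\<lambda>L. (-1) * g v L) + g 0"
    using g v rvec.subspace_0[OF V] unfolding linear_on_def by blast
  also have "\<dots> = - g v" using linear_on_zero[OF V g] by (simp add: fun_eq_iff zero_fun_def)
  finally show ?thesis .
qed

lemma linear_on_sum:
  assumes V: "rvec.subspace V" and g: "linear_on V g" and "finite A" and x: "\<And>a. a \<in> A \<Longrightarrow> x a \<in> V"
  shows "g (\<Sum>a\<in>A. (\<lambda>L. c a * x a L)) = (\<Sum>a\<in>A. (\<lambda>L. c a * g (x a) L))"
  using \<open>finite A\<close> x
proof (induct A rule: finite_induct)
  case empty then show ?case using linear_on_zero[OF V g] by (simp add: zero_fun_def)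
next
  case (insert a A)
  have "(\<Sum>b\<in>A. (\<lambda>L. c b * x b L)) \<in> V"
    using insert by (intro rvec.subspace_sum[OF V] rvec.subspace_scale[OF V]) auto
  moreover have "x a \<in> V" using insert by simp
  ultimately have "g ((\<lambda>L. c a * x a L) + (\<Sum>b\<in>A. (\<lambda>L. c b * x b L))) =
      (\<lambda>L. c a * g (x a) L) + g (\<Sum>b\<in>A. (\<lambda>L. c b * x b L))"
    using g unfolding linear_on_def by blast
  moreover have "g (\<Sum>b\<in>A. (\<lambda>L. c b * x b L)) = (\<Sum>b\<in>A. (\<lambda>L. c b * g (x b) L))"
    using insert by simp
  ultimately show ?case unfolding sum.insert[OF insert(1,2)] by (simp only:)
qed

definition signed_basis_perm :: "'w monoid \<Rightarrow> 'w set \<Rightarrow> ('w vec \<Rightarrow> 'w vec) \<Rightarrow> bool" where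
  "signed_basis_perm W S g \<longleftrightarrow>
     (\<forall>v\<in>Espace W S. g v \<in> Espace W S) \<and> linear_on (Espace W S) g \<and>
     (\<forall>J\<in>conn W S. \<exists>K\<in>conn W S. g (eps J) = eps K \<or> g (eps J) = - eps K)"

lemma signed_basis_perm_cong:
  assumes g: "signed_basis_perm W S g" and eq: "\<And>v. v \<in> Espace W S \<Longrightarrow> g' v = g v"
  shows "signed_basis_perm W S g'"
proof -
  have "(\<lambda>L. c * v L) + w \<in> Espace W S" if "v \<in> Espace W S" "w \<in> Espace W S" for c v w
    using that by (intro rvec.subspace_add[OF Espace_subspace] rvec.subspace_scale[OF Espace_subspace])
  moreover have "g' (eps J) = g (eps J)" if "J \<in> conn W S" for J
    using eq eps_Espace[OF that] .
  ultimately show ?thesis using g eq unfolding signed_basis_perm_def linear_on_def by simp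
qed

lemma signed_basis_perm_comp:
  assumes g: "signed_basis_perm W S g" and h: "signed_basis_perm W S h"
  shows "signed_basis_perm W S (\<lambda>v. g (h v))"
proof -
  have gE: "\<And>v. v \<in> Espace W S \<Longrightarrow> g v \<in> Espace W S" and hE: "\<And>v. v \<in> Espace W S \<Longrightarrow> h v \<in> Espace W S"
    and gl: "linear_on (Espace W S) g" and hl: "linear_on (Espace W S) h"
    using g h by (simp_all add: signed_basis_perm_def)
  have "linear_on (Espace W S) (\<lambda>v. g (h v))"
    using gl hl hE unfolding linear_on_def by simp
  moreover have "\<exists>K\<in>conn W S. g (h (eps J)) = eps K \<or> g (h (eps J)) = - eps K" if J: "J \<in> conn W S" for J
  proof -
    obtain K where K: "K \<in> conn W S" "h (eps J) = eps K \<or> h (eps J) = - eps K"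
      using h J by (auto simp: signed_basis_perm_def)
    obtain K' where "K' \<in> conn W S" "g (eps K) = eps K' \<or> g (eps K) = - eps K'"
      using g K(1) by (auto simp: signed_basis_perm_def)
    moreover have "g (- eps K) = - g (eps K)" by (rule linear_on_neg[OF Espace_subspace gl eps_Espace[OF K(1)]])
    ultimately show ?thesis using K(2) by auto
  qed
  ultimately show ?thesis using gE hE by (simp add: signed_basis_perm_def)
qed

lemma signed_basis_perm_trivial:
  assumes "conn W S = {}" and "\<And>v. v \<in> Espace W S \<Longrightarrow> g v \<in> Espace W S"
  shows "signed_basis_perm W S g"
proof -
  have "Espace W S = {0}" using assms(1) by (auto simp: Espace_def fun_eq_iff)
  moreover have "g 0 = 0" using assms(2) \<open>Espace W S = {0}\<close> by blast
  ultimately show ?thesis using assms by (auto simp: signed_basis_perm_def linear_on_def zero_fun_def)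
qed

text \<open>A signed permutation is determined on \<open>E\<close> by the images of the finitely many basis
vectors, each of which lies in the finite set \<open>{\<plusminus>\<epsilon>\<^sub>K}\<close>.\<close>

lemma finite_signed_basis_perms:
  assumes fin: "finite (conn W S)"
  shows "finite ((\<lambda>g. restrict g (Espace W S)) ` {g. signed_basis_perm W S g})"
proof -
  define B where "B = eps ` conn W S \<union> (\<lambda>K. - eps K) ` conn W S"
  define \<Phi> where "\<Phi> \<phi> = restrict (\<lambda>v. \<Sum>J\<in>conn W S. (\<lambda>L. v J * \<phi> J L)) (Espace W S)"
    for \<phi> :: "'a set \<Rightarrow> 'a vec"
  have "(\<lambda>g. restrict g (Espace W S)) ` {g. signed_basis_perm W S g} \<subseteq> \<Phi> ` (conn W S \<rightarrow>\<^sub>E B)"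
  proof clarify
    fix g assume g: "signed_basis_perm W S g"
    define \<phi> where "\<phi> = restrict (\<lambda>J. g (eps J)) (conn W S)"
    have "\<phi> \<in> conn W S \<rightarrow>\<^sub>E B"
      using g by (force simp: \<phi>_def B_def signed_basis_perm_def)
    moreover have "restrict g (Espace W S) = \<Phi> \<phi>"
    proof
      fix v
      have "g v = (\<Sum>J\<in>conn W S. (\<lambda>L. v J * g (eps J) L))" if v: "v \<in> Espace W S"
      proof -
        have "g v = g (\<Sum>J\<in>conn W S. (\<lambda>L. v J * eps J L))"
          using Espace_eq_sum_eps[OF fin v] by simp
        also have "\<dots> = (\<Sum>J\<in>conn W S. (\<lambda>L. v J * g (eps J) L))"
          using g fin eps_Espace by (intro linear_on_sum[OF Espace_subspace]) (auto simp: signed_basis_perm_def)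
        finally show ?thesis .
      qed
      moreover have "(\<Sum>J\<in>conn W S. (\<lambda>L. v J * g (eps J) L)) = (\<Sum>J\<in>conn W S. (\<lambda>L. v J * \<phi> J L))"
        by (rule sum.cong) (simp_all add: \<phi>_def)
      ultimately show "restrict g (Espace W S) v = \<Phi> \<phi> v" by (simp add: \<Phi>_def)
    qed
    ultimately show "restrict g (Espace W S) \<in> \<Phi> ` (conn W S \<rightarrow>\<^sub>E B)" by blast
  qed
  moreover have "finite B" using fin by (simp add: B_def)
  ultimately show ?thesis using fin by (meson finite_PiE finite_imageI finite_subset)
qed

lemma signed_basis_perm_rho_I:
  assumes "finite (conn W S)" "I \<in> conn W S"
    and "\<And>J. J \<in> Csub W S I \<Longrightarrow> conj_set W S I J \<in> Csub W S I"
    and "\<And>J. J \<in> Csub W S I \<Longrightarrow> conj_set W S I (conj_set W S I J) = J"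
  shows "signed_basis_perm W S (rho_I W S I)"
proof -
  have "\<exists>K\<in>conn W S. rho_basis W S I J = eps K \<or> rho_basis W S I J = - eps K" if "J \<in> conn W S" for J
    using that assms(2,3) by (auto simp: rho_basis_def Csub_def)
  then show ?thesis
    using rho_I_Espace[OF assms] rho_I_linear_on[OF assms] rho_I_eps[OF assms]
    by (simp add: signed_basis_perm_def)
qed

text \<open>The unit is \<open>\<gamma>\<^sub>I \<gamma>\<^sub>I\<close> for any \<open>I \<in> F(S)\<close>; if \<open>F(S) = {}\<close>, then \<open>E = 0\<close>.\<close>

lemma signed_basis_perm_generated:
  fixes C :: "'c monoid" and \<gamma> :: "'w set \<Rightarrow> 'c" and \<rho> :: "'c \<Rightarrow> 'w vec \<Rightarrow> 'w vec"
  assumes C: "group C" and rels: "cactus_rels W S C \<gamma>"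
    and rho_into: "\<And>x v. x \<in> carrier C \<Longrightarrow> v \<in> Espace W S \<Longrightarrow> \<rho> x v \<in> Espace W S"
    and rho_hom: "\<And>x y v. x \<in> carrier C \<Longrightarrow> y \<in> carrier C \<Longrightarrow> v \<in> Espace W S \<Longrightarrow>
                    \<rho> (x \<otimes>\<^bsub>C\<^esub> y) v = \<rho> x (\<rho> y v)"
    and gens: "\<And>I. I \<in> conn W S \<Longrightarrow> signed_basis_perm W S (\<rho> (\<gamma> I))"
    and x: "x \<in> generate C (\<gamma> ` conn W S)"
  shows "signed_basis_perm W S (\<rho> x)"
proof -
  have \<gamma>_carrier: "\<gamma> I \<in> carrier C" and \<gamma>_invol: "\<gamma> I \<otimes>\<^bsub>C\<^esub> \<gamma> I = \<one>\<^bsub>C\<^esub>" if "I \<in> conn W S" for I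
    using rels that by (auto simp: cactus_rels_def)
  have gen_carrier: "generate C (\<gamma> ` conn W S) \<subseteq> carrier C"
    using group.generate_in_carrier[OF C] \<gamma>_carrier by blast
  show ?thesis using x
  proof induct
    case one
    show ?case
    proof (cases "conn W S = {}")
      case True
      then show ?thesis using rho_into[OF monoid.one_closed[OF group.is_monoid[OF C]]]
        by (intro signed_basis_perm_trivial)
    next
      case False
      then obtain I where I: "I \<in> conn W S" by blast
      have "\<rho> \<one>\<^bsub>C\<^esub> v = \<rho> (\<gamma> I) (\<rho> (\<gamma> I) v)" if "v \<in> Espace W S" for v
        using rho_hom[OF \<gamma>_carrier[OF I] \<gamma>_carrier[OF I] that] \<gamma>_invol[OF I] by simp
      then show ?thesis by (rule signed_basis_perm_cong[OF signed_basis_perm_comp[OF gens[OF I] gens[OF I]]])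
    qed
  next
    case (incl h)
    then show ?case using gens by blast
  next
    case (inv h)
    then obtain I where "I \<in> conn W S" "h = \<gamma> I" by blast
    then show ?case using group.inv_involution[OF C] \<gamma>_carrier \<gamma>_invol gens by simp
  next
    case (eng h1 h2)
    then have "\<rho> (h1 \<otimes>\<^bsub>C\<^esub> h2) v = \<rho> h1 (\<rho> h2 v)" if "v \<in> Espace W S" for v
      using rho_hom gen_carrier that by blast
    then show ?case by (rule signed_basis_perm_cong[OF signed_basis_perm_comp[OF eng(2,4)]])
  qed
qed

lemma (in coxeter) signed_basis_perm_rho_I_coxeter:
  assumes I: "I \<in> conn W S"
  shows "signed_basis_perm W S (rho_I W S I)"
proof (rule signed_basis_perm_rho_I[OF finite_conn I conj_set_Csub[OF I]])
  show "conj_set W S I (conj_set W S I J) = J" if "J \<in> Csub W S I" for J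
    using that by (intro conj_set_conj_set[OF I]) (auto simp: Csub_def)
qed

theorem mainTheorem12:
  fixes W :: "'w monoid" and S :: "'w set"
    and C :: "'c monoid" and \<gamma> :: "'w set \<Rightarrow> 'c"
    and \<rho> :: "'c \<Rightarrow> 'w vec \<Rightarrow> 'w vec"
  assumes cox: "coxeter_system W S"
    and cactus: "cactus_group W S C \<gamma>"
    and rho_into: "\<And>x v. x \<in> carrier C \<Longrightarrow> v \<in> Espace W S \<Longrightarrow> \<rho> x v \<in> Espace W S"
    and rho_hom: "\<And>x y v. x \<in> carrier C \<Longrightarrow> y \<in> carrier C \<Longrightarrow> v \<in> Espace W S \<Longrightarrow>
                    \<rho> (x \<otimes>\<^bsub>C\<^esub> y) v = \<rho> x (\<rho> y v)"
    and rho_gen: "\<And>I v. I \<in> conn W S \<Longrightarrow> v \<in> Espace W S \<Longrightarrow> \<rho> (\<gamma> I) v = rho_I W S I v"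
  shows "(\<forall>x \<in> carrier C. \<forall>J \<in> conn W S. \<exists>K \<in> conn W S.
            \<rho> x (eps J) = eps K \<or> \<rho> x (eps J) = - eps K)
       \<and> finite ((\<lambda>x. restrict (\<rho> x) (Espace W S)) ` carrier C)
       \<and> (infinite (carrier C) \<longrightarrow> \<not> inj_on (\<lambda>x. restrict (\<rho> x) (Espace W S)) (carrier C))
       \<and> (\<forall>H. subgroup H C \<longrightarrow> infinite H \<longrightarrow>
            \<not> inj_on (\<lambda>x. restrict (\<rho> x) (Espace W S)) H)"
proof -
  interpret coxeter W S by (rule coxeter.intro[OF cox])
  have C: "group C" "cactus_rels W S C \<gamma>" "generate C (\<gamma> ` conn W S) = carrier C"
    using cactus by (simp_all add: cactus_group_def)
  have gen_perm: "signed_basis_perm W S (\<rho> (\<gamma> I))" if I: "I \<in> conn W S" for I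
    using rho_gen[OF I] by (rule signed_basis_perm_cong[OF signed_basis_perm_rho_I_coxeter[OF I]])
  have perm: "signed_basis_perm W S (\<rho> x)" if "x \<in> carrier C" for x
  proof (rule signed_basis_perm_generated[OF C(1,2) rho_into rho_hom gen_perm])
    show "x \<in> generate C (\<gamma> ` conn W S)" using that C(3) by simp
  qed
  have fin: "finite ((\<lambda>x. restrict (\<rho> x) (Espace W S)) ` H)" if H: "H \<subseteq> carrier C" for H
  proof (rule finite_subset[OF _ finite_signed_basis_perms[OF finite_conn]])
    show "(\<lambda>x. restrict (\<rho> x) (Espace W S)) ` H \<subseteq> (\<lambda>g. restrict g (Espace W S)) ` {g. signed_basis_perm W S g}"
      using perm H by auto
  qed
  show ?thesis
  proof (intro conjI allI impI ballI)
    show "\<exists>K\<in>conn W S. \<rho> x (eps J) = eps K \<or> \<rho> x (eps J) = - eps K"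
      if "x \<in> carrier C" "J \<in> conn W S" for x J
      using perm[OF that(1)] that(2) unfolding signed_basis_perm_def by blast
    show "finite ((\<lambda>x. restrict (\<rho> x) (Espace W S)) ` carrier C)" by (rule fin) simp
    show "\<not> inj_on (\<lambda>x. restrict (\<rho> x) (Espace W S)) H" if "subgroup H C" "infinite H" for H
      using finite_imageD fin[OF subgroup.subset[OF that(1)]] that(2) by blast
    show "\<not> inj_on (\<lambda>x. restrict (\<rho> x) (Espace W S)) (carrier C)" if "infinite (carrier C)"
      using finite_imageD fin that by blast
  qed
qed

end
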